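(* Let $S$ be a $d\times d$ symmetric positive semidefinite matrix with $S_{ii}>0$ for all $i$, and let $\rho>0$. The positive graphical lasso problem of minimizing $-\log\det K+\operatorname{tr}(SK)+\rho\sum_{i\neq j}\max\{0,K_{ij}\}$ over positive definite $K$ has an optimum, which is unique, as long as $S_{ij}<\sqrt{S_{ii}S_{jj}}$ for all $i\ne j$; this condition holds with probability one if $S=\boldsymbol X^T\boldsymbol X/n$ is the sample covariance of $n\ge2$ i.i.d. observations from $N(0,\Sigma^* )$ with $\Sigma^*$ positive definite. The same holds in general for minimizing $-\log\det K+\operatorname{tr}(SK)+\sum_{i\neq j}\max\{L_{ij}K_{ij},U_{ij}K_{ij}\}$ whenever $U_{ij}>0$ for all $i\neq j$, where $L,U$ are symmetric with entries in $\mathbb{R}\cup\{\pm\infty\}$, $L_{ij}\le0$, $L_{ii}=U_{ii}=0$ (convention $\pm\infty\cdot0=0$). *)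

theory Defs
  imports "HOL-Analysis.Analysis" "HOL-Probability.Probability"
begin

definition sym_mat :: "'a^'n^'n \<Rightarrow> bool" where
  "sym_mat A \<longleftrightarrow> (\<forall>i j. A$i$j = A$j$i)"

definition psd_mat :: "real^'n^'n \<Rightarrow> bool" where
  "psd_mat S \<longleftrightarrow> sym_mat S \<and> (\<forall>x. 0 \<le> x \<bullet> (S *v x))"

definition pd_mat :: "real^'n^'n \<Rightarrow> bool" where
  "pd_mat K \<longleftrightarrow> sym_mat K \<and> (\<forall>x. x \<noteq> 0 \<longrightarrow> 0 < x \<bullet> (K *v x))"

definition pos_glasso_obj :: "real^'n^'n \<Rightarrow> real \<Rightarrow> real^'n^'n \<Rightarrow> real" where
  "pos_glasso_obj S \<rho> K =
     - ln (det K) + trace (S ** K) + \<rho> * (\<Sum>i\<in>UNIV. \<Sum>j\<in>UNIV - {i}. max 0 (K$i$j))"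

text \<open>General objective with extended-real bounds L, U; ereal multiplication
  satisfies (+-infinity) * 0 = 0.\<close>
definition gen_glasso_obj ::
  "real^'n^'n \<Rightarrow> ereal^'n^'n \<Rightarrow> ereal^'n^'n \<Rightarrow> real^'n^'n \<Rightarrow> ereal" where
  "gen_glasso_obj S L U K =
     ereal (- ln (det K) + trace (S ** K)) +
     (\<Sum>i\<in>UNIV. \<Sum>j\<in>UNIV - {i}. max (L$i$j * ereal (K$i$j)) (U$i$j * ereal (K$i$j)))"

definition gauss_vec :: "real^'n^'n \<Rightarrow> (real^'n) measure" where
  "gauss_vec \<Sigma> = density lborel (\<lambda>x. ennreal
     ((2 * pi) powr (- real CARD('n) / 2) * det \<Sigma> powr (-1/2)
       * exp (- (x \<bullet> (matrix_inv \<Sigma> *v x)) / 2)))"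

definition sample_cov :: "nat \<Rightarrow> (nat \<Rightarrow> real^'n) \<Rightarrow> real^'n^'n" where
  "sample_cov n X = (\<chi> i j. (\<Sum>k<n. X k $ i * X k $ j) / real n)"

end

theory Submission
  imports Defs
begin

(* The objective is -log det K, which is strictly convex on positive definite matrices
   (simultaneous diagonalization reduces this to AM-GM), plus the convex term
   tr(SK) + penalty; hence a minimizer is unique. For existence, write
   tr(SK) = v'Kv - sum_{i<>j} (sqrt(S_ii S_jj) - S_ij) K_ij with v_i = sqrt(S_ii): since
   v'Kv >= 0 and every gap sqrt(S_ii S_jj) - S_ij is positive, negative off-diagonal entries
   of K are paid for by tr(SK) and positive ones by the penalty, so the objective dominates
   a multiple of tr K. As det K <= d! (tr K)^d, the sublevel sets are then compact subsets of
   the positive definite cone.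
   For a Gaussian sample, equality in the Cauchy-Schwarz inequality S_ij <= sqrt(S_ii S_jj)
   forces the 2x2 minor of the first two observations in coordinates i, j to vanish; given
   the second observation, this confines the first one to a hyperplane, a null set. *)

definition bilin_form :: "real^'n^'n \<Rightarrow> real^'n \<Rightarrow> real^'n \<Rightarrow> real" where
  "bilin_form M x y = x \<bullet> (M *v y)"

lemma psd_mat_iff: "psd_mat K \<longleftrightarrow> sym_mat K \<and> (\<forall>x. 0 \<le> bilin_form K x x)"
  by (simp add: psd_mat_def bilin_form_def)

lemma pd_mat_iff: "pd_mat K \<longleftrightarrow> sym_mat K \<and> (\<forall>x. x \<noteq> 0 \<longrightarrow> 0 < bilin_form K x x)"
  by (simp add: pd_mat_def bilin_form_def)

lemma psd_mat_sym: "psd_mat K \<Longrightarrow> sym_mat K"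
  by (simp add: psd_mat_def)

lemma pd_mat_sym: "pd_mat K \<Longrightarrow> sym_mat K"
  by (simp add: pd_mat_def)

lemma pd_mat_pos: "pd_mat K \<Longrightarrow> x \<noteq> 0 \<Longrightarrow> 0 < bilin_form K x x"
  by (simp add: pd_mat_iff)

lemma pd_imp_psd_mat: "pd_mat K \<Longrightarrow> psd_mat K"
  unfolding psd_mat_iff pd_mat_iff by (metis bilin_form_def inner_zero_left order.refl less_imp_le)

lemma pd_mat_1: "pd_mat (mat 1 :: real^'n^'n)"
  unfolding pd_mat_def sym_mat_def matrix_vector_mul_lid by (simp add: mat_def)

lemma bilin_form_eq_sum: "bilin_form M x y = (\<Sum>i\<in>UNIV. \<Sum>j\<in>UNIV. x$i * M$i$j * y$j)"
  unfolding bilin_form_def inner_vec_def matrix_vector_mult_def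
  by (simp add: sum_distrib_left mult.assoc)

lemma bilin_form_sym:
  assumes "sym_mat M"
  shows "bilin_form M x y = bilin_form M y x"
proof -
  have "bilin_form M x y = (\<Sum>j\<in>UNIV. \<Sum>i\<in>UNIV. x$i * M$i$j * y$j)"
    unfolding bilin_form_eq_sum by (rule sum.swap)
  also have "\<dots> = bilin_form M y x"
    using assms unfolding bilin_form_eq_sum sym_mat_def by (simp add: mult.commute mult.left_commute)
  finally show ?thesis .
qed

lemma bilin_form_zero_left [simp]: "bilin_form M 0 y = 0"
  by (simp add: bilin_form_def)

lemma bilin_form_add_left: "bilin_form M (x + y) z = bilin_form M x z + bilin_form M y z"
  by (simp add: bilin_form_def inner_add_left)

lemma bilin_form_diff_left: "bilin_form M (x - y) z = bilin_form M x z - bilin_form M y z"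
  by (simp add: bilin_form_def inner_diff_left)

lemma bilin_form_scaleR_left: "bilin_form M (c *\<^sub>R x) z = c * bilin_form M x z"
  by (simp add: bilin_form_def)

lemma bilin_form_add_right: "bilin_form M z (x + y) = bilin_form M z x + bilin_form M z y"
  by (simp add: bilin_form_def matrix_vector_right_distrib inner_add_right)

lemma bilin_form_scaleR_right: "bilin_form M z (c *\<^sub>R x) = c * bilin_form M z x"
  by (simp add: bilin_form_def matrix_vector_mult_scaleR)

lemma bilin_form_mat_add: "bilin_form (A + B) x y = bilin_form A x y + bilin_form B x y"
  by (simp add: bilin_form_def matrix_vector_mult_add_rdistrib inner_add_right)

lemma bilin_form_mat_scaleR: "bilin_form (c *\<^sub>R A) x y = c * bilin_form A x y"
  by (simp add: bilin_form_eq_sum sum_distrib_left algebra_simps)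

lemma bilin_form_scaleR_self: "bilin_form M (c *\<^sub>R x) (c *\<^sub>R x) = c\<^sup>2 * bilin_form M x x"
  by (simp add: bilin_form_scaleR_left bilin_form_scaleR_right power2_eq_square)

lemma bilin_form_add_scaleR_self:
  assumes "sym_mat M"
  shows "bilin_form M (x + t *\<^sub>R y) (x + t *\<^sub>R y)
    = bilin_form M x x + 2 * t * bilin_form M y x + t\<^sup>2 * bilin_form M y y"
  using bilin_form_sym[OF assms, of x y]
  by (simp add: bilin_form_add_left bilin_form_add_right bilin_form_scaleR_left
      bilin_form_scaleR_right power2_eq_square algebra_simps)

lemma bilin_form_axis: "bilin_form M (axis i 1) (axis j 1) = M$i$j"
proof -
  have "bilin_form M (axis i 1) (axis j 1) = (\<Sum>l\<in>UNIV. M$i$l * (if l = j then 1 else 0))"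
    unfolding bilin_form_def inner_axis' by (simp add: matrix_vector_mult_def axis_def)
  then show ?thesis by (simp add: if_distrib cong: if_cong)
qed

lemma continuous_on_bilin_form [continuous_intros]:
  "continuous_on S f \<Longrightarrow> continuous_on S g \<Longrightarrow> continuous_on S (\<lambda>x. bilin_form M (f x) (g x))"
  unfolding bilin_form_def matrix_vector_mult_def inner_vec_def by (intro continuous_intros)

lemma continuous_on_bilin_form_matrix: "continuous_on S (\<lambda>K. bilin_form K x y)"
  unfolding bilin_form_eq_sum by (intro continuous_intros)

lemma congruence_entry: "(X ** M ** transpose X) $ i $ j = bilin_form M (X$i) (X$j)"
proof -
  have "(X ** M ** transpose X) $ i $ j = (\<Sum>k\<in>UNIV. \<Sum>l\<in>UNIV. X$i$l * M$l$k * X$j$k)"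
    by (simp add: matrix_matrix_mult_def transpose_def sum_distrib_right)
  also have "\<dots> = bilin_form M (X$i) (X$j)"
    unfolding bilin_form_eq_sum by (rule sum.swap)
  finally show ?thesis .
qed

lemma det_congruence_diagonal:
  assumes "\<And>i j. i \<noteq> j \<Longrightarrow> bilin_form M (X$i) (X$j) = 0"
  shows "det X * det X * det M = (\<Prod>i\<in>UNIV. bilin_form M (X$i) (X$i))"
proof -
  have "det (X ** M ** transpose X) = (\<Prod>i\<in>UNIV. bilin_form M (X$i) (X$i))"
    by (subst det_diagonal) (use assms in \<open>auto simp: congruence_entry\<close>)
  then show ?thesis by (simp add: det_mul mult_ac)
qed

lemma congruence_cancel:
  fixes X A B :: "real^'n^'n"
  assumes "det X \<noteq> 0" and "X ** A ** transpose X = X ** B ** transpose X"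
  shows "A = B"
proof -
  obtain Y where YX: "Y ** X = mat 1"
    using assms(1) by (auto simp: invertible_det_nz[symmetric] invertible_def)
  have "Y ** (X ** M ** transpose X) ** transpose Y = M" for M :: "real^'n^'n"
  proof -
    have "Y ** (X ** M ** transpose X) ** transpose Y = (Y ** X) ** M ** transpose (Y ** X)"
      by (simp add: matrix_mul_assoc matrix_transpose_mul)
    then show ?thesis by (simp add: YX)
  qed
  then show ?thesis using assms(2) by metis
qed

lemma quadratic_nonpos_imp_linear_coeff_zero:
  fixes b c :: real
  assumes "\<And>t. 2 * t * b + t\<^sup>2 * c \<le> 0"
  shows "b = 0"
proof (rule ccontr)
  assume "b \<noteq> 0"
  define k where "k = \<bar>c\<bar> + 1"
  have "k > 0" by (simp add: k_def)
  have eq: "2 * (b / k) * b + (b / k)\<^sup>2 * c = (b\<^sup>2 / k) * (2 + c / k)"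
    using \<open>k > 0\<close> by (simp add: field_simps power2_eq_square)
  have "b\<^sup>2 / k > 0" using \<open>b \<noteq> 0\<close> \<open>k > 0\<close> by simp
  moreover have "2 + c / k > 0"
    using \<open>k > 0\<close> by (simp add: k_def field_simps abs_if)
  ultimately have "2 * (b / k) * b + (b / k)\<^sup>2 * c > 0"
    unfolding eq by (rule mult_pos_pos)
  then show False using assms[of "b / k"] by linarith
qed

section \<open>Simultaneous diagonalization\<close>

lemma rayleigh_quotient_attains_max:
  fixes A B :: "real^'n^'n"
  assumes A: "pd_mat A" and V: "subspace V" "V \<noteq> {0}"
  obtains u where "u \<in> V" "u \<noteq> 0"
    "\<And>z. z \<in> V \<Longrightarrow> z \<noteq> 0 \<Longrightarrow>
      bilin_form B z z / bilin_form A z z \<le> bilin_form B u u / bilin_form A u u"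
proof -
  define R where "R x = bilin_form B x x / bilin_form A x x" for x
  define Sph where "Sph = V \<inter> sphere 0 1"
  have normalize: "(1 / norm z) *\<^sub>R z \<in> Sph" if "z \<in> V" "z \<noteq> 0" for z
    using that V(1) unfolding Sph_def by (simp add: subspace_scale)
  have "bilin_form A x x \<noteq> 0" if "x \<in> Sph" for x
  proof -
    have "x \<noteq> 0" using that unfolding Sph_def by auto
    then show ?thesis using pd_mat_pos[OF A, of x] by linarith
  qed
  then have "continuous_on Sph R"
    unfolding R_def by (intro continuous_intros) auto
  moreover have "compact Sph"
    unfolding Sph_def by (intro closed_Int_compact closed_subspace V(1) compact_sphere)
  moreover have "Sph \<noteq> {}"
    using V normalize subspace_0 by blast
  ultimately obtain u where u: "u \<in> Sph" and umax: "\<And>y. y \<in> Sph \<Longrightarrow> R y \<le> R u"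
    by (metis continuous_attains_sup)
  show thesis
  proof
    show "u \<in> V" "u \<noteq> 0" using u unfolding Sph_def by auto
    fix z assume "z \<in> V" "z \<noteq> 0"
    have "R z = R ((1 / norm z) *\<^sub>R z)"
      unfolding R_def bilin_form_scaleR_self using \<open>z \<noteq> 0\<close> by simp
    also have "\<dots> \<le> R u" by (rule umax[OF normalize[OF \<open>z \<in> V\<close> \<open>z \<noteq> 0\<close>]])
    finally show "bilin_form B z z / bilin_form A z z \<le> bilin_form B u u / bilin_form A u u"
      unfolding R_def .
  qed
qed

text \<open>At a maximizer \<open>u\<close> of the Rayleigh quotient, the first variation in any direction
  \<open>A\<close>-orthogonal to \<open>u\<close> vanishes, so that direction is \<open>B\<close>-orthogonal to \<open>u\<close> as well.\<close>

lemma rayleigh_max_orthogonal: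
  fixes A B :: "real^'n^'n"
  assumes A: "pd_mat A" and B: "sym_mat B" and V: "subspace V"
    and u: "u \<in> V" "u \<noteq> 0"
    and umax: "\<And>z. z \<in> V \<Longrightarrow> z \<noteq> 0 \<Longrightarrow>
      bilin_form B z z / bilin_form A z z \<le> bilin_form B u u / bilin_form A u u"
    and y: "y \<in> V" "bilin_form A y u = 0"
  shows "bilin_form B y u = 0"
proof (rule quadratic_nonpos_imp_linear_coeff_zero)
  fix t :: real
  define \<mu> where "\<mu> = bilin_form B u u / bilin_form A u u"
  define z where "z = u + t *\<^sub>R y"
  have Au: "bilin_form A u u > 0" using pd_mat_pos[OF A u(2)] .
  have Ay: "bilin_form A y y \<ge> 0" using pd_mat_pos[OF A, of y] by (cases "y = 0") auto
  have Az: "bilin_form A z z = bilin_form A u u + t\<^sup>2 * bilin_form A y y"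
    unfolding z_def bilin_form_add_scaleR_self[OF pd_mat_sym[OF A]] y(2) by simp
  then have "bilin_form A z z > 0" using Au Ay by (simp add: add_pos_nonneg)
  moreover from this have "z \<noteq> 0" by auto
  moreover have "z \<in> V" unfolding z_def using u y V by (simp add: subspace_add subspace_scale)
  ultimately have "bilin_form B z z \<le> \<mu> * bilin_form A z z"
    using umax[of z] unfolding \<mu>_def by (auto simp: divide_le_eq)
  moreover have "bilin_form B u u = \<mu> * bilin_form A u u" unfolding \<mu>_def using Au by simp
  ultimately show "2 * t * bilin_form B y u + t\<^sup>2 * (bilin_form B y y - \<mu> * bilin_form A y y) \<le> 0"
    unfolding z_def bilin_form_add_scaleR_self[OF B] using Az[unfolded z_def]
    by (simp add: algebra_simps)
qed

lemma subspace_orthogonal_complement: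
  "subspace V \<Longrightarrow> subspace {y \<in> V. bilin_form A y u = 0}"
  unfolding subspace_def by (auto simp: bilin_form_add_left bilin_form_scaleR_left)

lemma span_insert_orthogonal_complement:
  assumes V: "subspace V" "u \<in> V" "bilin_form A u u \<noteq> 0"
    and W: "span W = {y \<in> V. bilin_form A y u = 0}"
  shows "span (insert u W) = V"
proof
  show "span (insert u W) \<subseteq> V"
    using V W span_superset[of W] by (intro span_minimal) auto
  show "V \<subseteq> span (insert u W)"
  proof
    fix x assume "x \<in> V"
    define k where "k = bilin_form A x u / bilin_form A u u"
    have "x - k *\<^sub>R u \<in> span W" unfolding W k_def
      using \<open>x \<in> V\<close> V by (simp add: subspace_diff subspace_scale bilin_form_diff_left bilin_form_scaleR_left)
    then show "x \<in> span (insert u W)" by (auto simp: span_insert)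
  qed
qed

lemma subspace_simultaneous_orthogonal_basis:
  fixes A B :: "real^'n^'n"
  assumes A: "pd_mat A" and B: "sym_mat B"
  shows "subspace V \<Longrightarrow> \<exists>W. span W = V \<and> 0 \<notin> W \<and>
    pairwise (\<lambda>x y. bilin_form A x y = 0 \<and> bilin_form B x y = 0) W"
proof (induction "dim V" arbitrary: V rule: less_induct)
  case less
  show ?case
  proof (cases "V = {0}")
    case True
    then show ?thesis by (intro exI[of _ "{}"]) auto
  next
    case False
    then obtain u where u: "u \<in> V" "u \<noteq> 0" and umax: "\<And>z. z \<in> V \<Longrightarrow> z \<noteq> 0 \<Longrightarrow>
        bilin_form B z z / bilin_form A z z \<le> bilin_form B u u / bilin_form A u u"
      using rayleigh_quotient_attains_max[OF A less.prems] by blast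
    have Au: "bilin_form A u u > 0" using pd_mat_pos[OF A u(2)] .
    define W0 where "W0 = {y \<in> V. bilin_form A y u = 0}"
    have "subspace W0" unfolding W0_def using less.prems by (rule subspace_orthogonal_complement)
    moreover have "u \<notin> W0" using Au unfolding W0_def by auto
    then have "W0 \<subset> V" using u(1) unfolding W0_def by blast
    then have "dim W0 < dim V"
      using dim_psubset \<open>subspace W0\<close> less.prems by (metis span_eq_iff)
    ultimately obtain W' where W': "span W' = W0" "0 \<notin> W'"
      "pairwise (\<lambda>x y. bilin_form A x y = 0 \<and> bilin_form B x y = 0) W'"
      using less.hyps by blast
    have W'_orth: "bilin_form A y u = 0 \<and> bilin_form B y u = 0" if "y \<in> W'" for y
      using that W'(1) span_base[of y W'] rayleigh_max_orthogonal[OF A B less.prems u umax]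
      unfolding W0_def by auto
    have "span (insert u W') = V"
      using less.prems u(1) Au W'(1) unfolding W0_def by (intro span_insert_orthogonal_complement) auto
    moreover have "pairwise (\<lambda>x y. bilin_form A x y = 0 \<and> bilin_form B x y = 0) (insert u W')"
      using W'(3) W'_orth bilin_form_sym[OF pd_mat_sym[OF A]] bilin_form_sym[OF B]
      by (auto simp: pairwise_insert)
    ultimately show ?thesis using u W'(2) by blast
  qed
qed

lemma pairwise_orthogonal_imp_independent:
  fixes A :: "real^'n^'n"
  assumes A: "pd_mat A" and "0 \<notin> W" and orth: "pairwise (\<lambda>x y. bilin_form A x y = 0) W"
  shows "independent W"
  unfolding independent_explicit_finite_subsets
proof (intro allI impI ballI)
  fix T u v
  assume T: "T \<subseteq> W" "finite T" and comb: "(\<Sum>v\<in>T. u v *\<^sub>R v) = 0" and v: "v \<in> T"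
  have "0 = bilin_form A (\<Sum>w\<in>T. u w *\<^sub>R w) v" using comb by (simp add: bilin_form_def)
  also have "\<dots> = (\<Sum>w\<in>T. u w * bilin_form A w v)"
    by (simp add: bilin_form_def inner_sum_left)
  also have "\<dots> = u v * bilin_form A v v"
    using T v orth by (subst sum.remove[OF T(2) v]) (force simp: pairwise_def intro!: sum.neutral)
  finally have "u v * bilin_form A v v = 0" by simp
  moreover have "bilin_form A v v > 0"
    using v T \<open>0 \<notin> W\<close> by (intro pd_mat_pos[OF A]) auto
  ultimately show "u v = 0" by simp
qed

lemma simultaneous_diagonalization:
  fixes A B :: "real^'n^'n"
  assumes A: "pd_mat A" and B: "sym_mat B"
  obtains X :: "real^'n^'n" where "det X \<noteq> 0" "\<And>i. X$i \<noteq> 0"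
    "\<And>i j. i \<noteq> j \<Longrightarrow> bilin_form A (X$i) (X$j) = 0"
    "\<And>i j. i \<noteq> j \<Longrightarrow> bilin_form B (X$i) (X$j) = 0"
proof -
  obtain W where W: "span W = UNIV" "0 \<notin> W"
    and orth: "pairwise (\<lambda>x y. bilin_form A x y = 0 \<and> bilin_form B x y = 0) W"
    using subspace_simultaneous_orthogonal_basis[OF A B subspace_UNIV] by blast
  have "independent W"
    using pairwise_orthogonal_imp_independent[OF A W(2)] orth by (simp add: pairwise_def)
  then have "finite W" and "card W = CARD('n)"
    using W(1) finiteI_independent basis_card_eq_dim[of W UNIV] by auto
  then obtain e where e: "bij_betw e (UNIV::'n set) W"
    using finite_same_card_bij[of "UNIV::'n set" W] by auto
  define X :: "real^'n^'n" where "X = (\<chi> i. e i)"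
  have X_W: "X$i \<in> W" for i using e unfolding X_def by (auto simp: bij_betw_def)
  have X_inj: "X$i \<noteq> X$j" if "i \<noteq> j" for i j
    using e that unfolding X_def by (auto simp: bij_betw_def inj_on_def)
  have nz: "X$i \<noteq> 0" for i using X_W W(2) by metis
  have offA: "bilin_form A (X$i) (X$j) = 0" and offB: "bilin_form B (X$i) (X$j) = 0"
    if "i \<noteq> j" for i j
    using orth X_W X_inj[OF that] by (auto simp: pairwise_def)
  have "det X * det X * det A = (\<Prod>i\<in>UNIV. bilin_form A (X$i) (X$i))"
    by (rule det_congruence_diagonal) (rule offA)
  also have "\<dots> > 0" by (intro prod_pos ballI pd_mat_pos[OF A] nz)
  finally have "det X \<noteq> 0" by (metis mult_zero_left less_irrefl)
  then show thesis by (rule that[OF _ nz offA offB])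
qed

lemma pd_mat_det_pos:
  fixes K :: "real^'n^'n"
  assumes K: "pd_mat K"
  shows "det K > 0"
proof -
  obtain X :: "real^'n^'n" where X: "det X \<noteq> 0" "\<And>i. X$i \<noteq> 0"
    "\<And>i j. i \<noteq> j \<Longrightarrow> bilin_form K (X$i) (X$j) = 0"
    using simultaneous_diagonalization[OF pd_mat_1 pd_mat_sym[OF K]] by metis
  have "det X * det X * det K = (\<Prod>i\<in>UNIV. bilin_form K (X$i) (X$i))"
    by (rule det_congruence_diagonal) (rule X(3))
  also have "\<dots> > 0" by (intro prod_pos ballI pd_mat_pos[OF K] X(2))
  finally show ?thesis using X(1) by (simp add: zero_less_mult_iff)
qed

lemma trace_mult_psd_nonneg:
  fixes S K :: "real^'n^'n"
  assumes S: "psd_mat S" and K: "psd_mat K"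
  shows "0 \<le> trace (S ** K)"
proof -
  obtain X :: "real^'n^'n" where X: "det X \<noteq> 0"
    "\<And>i j. i \<noteq> j \<Longrightarrow> bilin_form K (X$i) (X$j) = 0"
    using simultaneous_diagonalization[OF pd_mat_1 psd_mat_sym[OF K]] by metis
  obtain Y where YX: "Y ** X = mat 1"
    using X(1) by (auto simp: invertible_det_nz[symmetric] invertible_def)
  define D where "D = X ** K ** transpose X"
  define S' where "S' = transpose Y ** S ** Y"
  have D_diag: "D$i$j = 0" if "i \<noteq> j" for i j
    unfolding D_def congruence_entry using X(2)[OF that] .
  have "Y ** D ** transpose Y = (Y ** X) ** K ** transpose (Y ** X)"
    unfolding D_def by (simp add: matrix_mul_assoc matrix_transpose_mul)
  then have "K = Y ** D ** transpose Y" by (simp add: YX)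
  then have "trace (S ** K) = trace ((S ** Y ** D) ** transpose Y)"
    by (simp add: matrix_mul_assoc)
  also have "\<dots> = trace (S' ** D)"
    unfolding S'_def by (subst trace_mul_sym) (simp add: matrix_mul_assoc)
  also have "\<dots> = (\<Sum>i\<in>UNIV. S'$i$i * D$i$i)"
  proof -
    have "(\<Sum>k\<in>UNIV. S'$i$k * D$k$i) = S'$i$i * D$i$i" for i
      by (subst sum.remove[of UNIV i]) (auto simp: D_diag intro!: sum.neutral)
    then show ?thesis by (simp add: trace_def matrix_matrix_mult_def)
  qed
  also have "\<dots> \<ge> 0"
    using S K unfolding S'_def D_def psd_mat_iff
    by (intro sum_nonneg mult_nonneg_nonneg)
      (auto simp: congruence_entry congruence_entry[of "transpose Y", simplified transpose_transpose])
  finally show ?thesis .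
qed

lemma psd_det_nonzero_imp_pd_mat:
  fixes K :: "real^'n^'n"
  assumes K: "psd_mat K" and det: "det K \<noteq> 0"
  shows "pd_mat K"
proof -
  have sym: "sym_mat K" and nonneg: "\<And>z. 0 \<le> bilin_form K z z"
    using K by (simp_all add: psd_mat_iff)
  have "0 < bilin_form K x x" if "x \<noteq> 0" for x
  proof (rule ccontr)
    assume "\<not> 0 < bilin_form K x x"
    then have x0: "bilin_form K x x = 0" using nonneg[of x] by simp
    have "bilin_form K y x = 0" for y
    proof -
      have "2 * t * (- bilin_form K y x) + t\<^sup>2 * (- bilin_form K y y) \<le> 0" for t
        using nonneg[of "x + t *\<^sub>R y"] unfolding bilin_form_add_scaleR_self[OF sym] x0 by simp
      then show ?thesis using quadratic_nonpos_imp_linear_coeff_zero by fastforce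
    qed
    then have Kx: "K *v x = 0"
      using inner_eq_zero_iff unfolding bilin_form_def by metis
    obtain Y where "Y ** K = mat 1"
      using det by (auto simp: invertible_det_nz[symmetric] invertible_def)
    then have "x = Y *v (K *v x)" by (simp add: matrix_vector_mul_assoc)
    then show False using \<open>x \<noteq> 0\<close> Kx by simp
  qed
  then show ?thesis using sym by (simp add: pd_mat_iff)
qed

lemma psd_mat_diag_nonneg: "psd_mat K \<Longrightarrow> 0 \<le> K$i$i"
  using bilin_form_axis[of K i i] by (metis psd_mat_iff)

lemma psd_mat_abs_entry_le_trace:
  fixes K :: "real^'n^'n"
  assumes K: "psd_mat K"
  shows "\<bar>K$i$j\<bar> \<le> trace K"
proof -
  have sym: "sym_mat K" using K by (rule psd_mat_sym)
  have sym_ij: "K$j$i = K$i$j" using sym by (simp add: sym_mat_def)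
  have "0 \<le> K$i$i + 2 * t * K$i$j + t\<^sup>2 * K$j$j" for t
  proof -
    have "0 \<le> bilin_form K (axis i 1 + t *\<^sub>R axis j 1) (axis i 1 + t *\<^sub>R axis j 1)"
      using K by (simp add: psd_mat_iff)
    then show ?thesis unfolding bilin_form_add_scaleR_self[OF sym] bilin_form_axis sym_ij .
  qed
  from this[of 1] this[of "-1"] have "\<bar>K$i$j\<bar> \<le> (K$i$i + K$j$j) / 2"
    by (simp add: abs_le_iff)
  moreover have diag_le: "K$k$k \<le> trace K" for k
    unfolding trace_def by (rule member_le_sum) (auto intro: psd_mat_diag_nonneg[OF K])
  ultimately show ?thesis using diag_le[of i] diag_le[of j] by argo
qed

lemma abs_det_le_fact_mult_power:
  fixes K :: "real^'n^'n"
  assumes "\<And>i j. \<bar>K$i$j\<bar> \<le> T"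
  shows "\<bar>det K\<bar> \<le> fact CARD('n) * T ^ CARD('n)"
proof -
  have "\<bar>det K\<bar> \<le> (\<Sum>p\<in>{p. p permutes (UNIV::'n set)}. \<bar>of_int (sign p) * (\<Prod>i\<in>UNIV. K$i$p i)\<bar>)"
    unfolding det_def by (rule sum_abs)
  also have "\<dots> \<le> (\<Sum>p\<in>{p. p permutes (UNIV::'n set)}. T ^ CARD('n))"
  proof (rule sum_mono)
    fix p
    have "\<bar>of_int (sign p) * (\<Prod>i\<in>UNIV. K$i$p i)\<bar> = (\<Prod>i\<in>UNIV. \<bar>K$i$p i\<bar>)"
      by (simp add: abs_mult abs_prod sign_def)
    also have "\<dots> \<le> (\<Prod>i\<in>(UNIV::'n set). T)"
      by (intro prod_mono) (auto intro: assms)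
    finally show "\<bar>of_int (sign p) * (\<Prod>i\<in>UNIV. K$i$p i)\<bar> \<le> T ^ CARD('n)" by simp
  qed
  also have "\<dots> = fact CARD('n) * T ^ CARD('n)"
    by (simp add: card_permutations)
  finally show ?thesis .
qed

lemma pd_mat_midpoint:
  assumes "pd_mat A" "pd_mat B"
  shows "pd_mat ((1/2) *\<^sub>R (A + B))"
  using assms unfolding pd_mat_iff sym_mat_def
  by (auto simp: bilin_form_mat_scaleR bilin_form_mat_add add_pos_pos)

lemma prod_mult_less_prod_mean_square:
  fixes a b :: "'a \<Rightarrow> real"
  assumes "finite I" "\<And>i. i \<in> I \<Longrightarrow> 0 < a i" "\<And>i. i \<in> I \<Longrightarrow> 0 < b i"
    and "i0 \<in> I" "a i0 \<noteq> b i0"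
  shows "(\<Prod>i\<in>I. a i * b i) < (\<Prod>i\<in>I. ((a i + b i) / 2)\<^sup>2)"
proof (rule prod_mono_strict[OF \<open>i0 \<in> I\<close> _ \<open>finite I\<close>])
  have gap: "((a i + b i) / 2)\<^sup>2 - a i * b i = ((a i - b i) / 2)\<^sup>2" for i
    by (simp add: power2_eq_square field_simps)
  have "((a i0 - b i0) / 2)\<^sup>2 > 0" using \<open>a i0 \<noteq> b i0\<close> by simp
  then show "a i0 * b i0 < ((a i0 + b i0) / 2)\<^sup>2" using gap[of i0] by linarith
  fix i assume "i \<in> I"
  show "0 \<le> a i * b i \<and> a i * b i \<le> ((a i + b i) / 2)\<^sup>2"
  proof
    show "0 \<le> a i * b i" using \<open>i \<in> I\<close> assms(2,3) by (simp add: less_imp_le)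
    show "a i * b i \<le> ((a i + b i) / 2)\<^sup>2"
      using gap[of i] zero_le_power2[of "(a i - b i) / 2"] by argo
  qed
  have "0 < a i + b i" using \<open>i \<in> I\<close> assms(2,3) by (simp add: add_pos_pos)
  then show "0 < ((a i + b i) / 2)\<^sup>2" by simp
qed

text \<open>Diagonalizing \<open>A\<close> and \<open>B\<close> simultaneously reduces this to AM-GM for the diagonal entries.\<close>

lemma det_mult_less_det_midpoint_square:
  fixes A B :: "real^'n^'n"
  assumes A: "pd_mat A" and B: "pd_mat B" and "A \<noteq> B"
  shows "det A * det B < (det ((1/2) *\<^sub>R (A + B)))\<^sup>2"
proof -
  obtain X :: "real^'n^'n" where X: "det X \<noteq> 0" "\<And>i. X$i \<noteq> 0"
    "\<And>i j. i \<noteq> j \<Longrightarrow> bilin_form A (X$i) (X$j) = 0"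
    "\<And>i j. i \<noteq> j \<Longrightarrow> bilin_form B (X$i) (X$j) = 0"
    using simultaneous_diagonalization[OF A pd_mat_sym[OF B]] by metis
  define a where "a i = bilin_form A (X$i) (X$i)" for i
  define b where "b i = bilin_form B (X$i) (X$i)" for i
  define \<delta> where "\<delta> = det X * det X"
  have a0: "a i > 0" and b0: "b i > 0" for i
    unfolding a_def b_def using X(2) pd_mat_pos A B by blast+
  have "\<delta> > 0" unfolding \<delta>_def using X(1) by (metis not_real_square_gt_zero)
  have dA: "\<delta> * det A = (\<Prod>i\<in>UNIV. a i)"
    unfolding \<delta>_def a_def by (rule det_congruence_diagonal) (rule X(3))
  have dB: "\<delta> * det B = (\<Prod>i\<in>UNIV. b i)"
    unfolding \<delta>_def b_def by (rule det_congruence_diagonal) (rule X(4))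
  have dM: "\<delta> * det ((1/2) *\<^sub>R (A + B)) = (\<Prod>i\<in>UNIV. (a i + b i) / 2)"
    unfolding \<delta>_def a_def b_def
    by (subst det_congruence_diagonal) (auto simp: X bilin_form_mat_scaleR bilin_form_mat_add)
  obtain i0 where "a i0 \<noteq> b i0"
  proof (rule ccontr)
    assume "\<not> thesis"
    then have "X ** A ** transpose X = X ** B ** transpose X"
      using that X(3,4) unfolding a_def b_def vec_eq_iff congruence_entry by metis
    then show False using congruence_cancel[OF X(1)] \<open>A \<noteq> B\<close> by blast
  qed
  then have "(\<Prod>i\<in>UNIV. a i * b i) < (\<Prod>i\<in>UNIV. ((a i + b i) / 2)\<^sup>2)"
    using a0 b0 by (intro prod_mult_less_prod_mean_square) auto
  then have "(\<delta> * det A) * (\<delta> * det B) < (\<delta> * det ((1/2) *\<^sub>R (A + B)))\<^sup>2"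
    unfolding dA dB dM by (simp add: prod.distrib prod_power_distrib)
  then have "\<delta>\<^sup>2 * (det A * det B) < \<delta>\<^sup>2 * (det ((1/2) *\<^sub>R (A + B)))\<^sup>2"
    by (simp add: power2_eq_square algebra_simps)
  then show ?thesis using \<open>\<delta> > 0\<close> by simp
qed

lemma neg_ln_det_midpoint_strict:
  fixes A B :: "real^'n^'n"
  assumes A: "pd_mat A" and B: "pd_mat B" and "A \<noteq> B"
  shows "- ln (det ((1/2) *\<^sub>R (A + B))) < (- ln (det A) - ln (det B)) / 2"
proof -
  have "det A > 0" "det B > 0" "det ((1/2) *\<^sub>R (A + B)) > 0"
    using pd_mat_det_pos pd_mat_midpoint A B by blast+
  moreover from this have "ln (det A * det B) < ln ((det ((1/2) *\<^sub>R (A + B)))\<^sup>2)"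
    using det_mult_less_det_midpoint_square[OF assms] by simp
  ultimately show ?thesis by (simp add: ln_mult ln_realpow)
qed

section \<open>Coercivity of the trace term\<close>

abbreviation offdiag_sum :: "('n \<Rightarrow> 'n \<Rightarrow> 'a::comm_monoid_add) \<Rightarrow> 'a" where
  "offdiag_sum f \<equiv> \<Sum>i\<in>UNIV. \<Sum>j\<in>UNIV - {i}. f i j"

lemma sum_split_diag_offdiag:
  fixes f :: "'n::finite \<Rightarrow> 'n \<Rightarrow> 'a::comm_monoid_add"
  shows "(\<Sum>i\<in>UNIV. \<Sum>j\<in>UNIV. f i j) = (\<Sum>i\<in>UNIV. f i i) + offdiag_sum f"
proof -
  have "(\<Sum>j\<in>UNIV. f i j) = f i i + (\<Sum>j\<in>UNIV - {i}. f i j)" for i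
    by (simp add: sum.remove)
  then show ?thesis by (simp add: sum.distrib)
qed

lemma trace_mult_eq_diag_offdiag:
  fixes S K :: "real^'n^'n"
  assumes "sym_mat K"
  shows "trace (S ** K) = (\<Sum>i\<in>UNIV. S$i$i * K$i$i) + offdiag_sum (\<lambda>i j. S$i$j * K$i$j)"
proof -
  have "trace (S ** K) = (\<Sum>i\<in>UNIV. \<Sum>j\<in>UNIV. S$i$j * K$i$j)"
    using assms unfolding trace_def matrix_matrix_mult_def sym_mat_def by simp
  then show ?thesis by (simp only: sum_split_diag_offdiag)
qed

lemma bilin_form_self_eq_diag_offdiag:
  "bilin_form K v v = (\<Sum>i\<in>UNIV. v$i * v$i * K$i$i) + offdiag_sum (\<lambda>i j. v$i * v$j * K$i$j)"
  unfolding bilin_form_eq_sum sum_split_diag_offdiag by (simp add: mult_ac)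

lemma trace_mult_ge_diag_offdiag:
  fixes S K :: "real^'n^'n"
  assumes K: "psd_mat K" and m: "\<And>i. m \<le> S$i$i" and M: "\<And>i j. \<bar>S$i$j\<bar> \<le> M"
  shows "m * trace K - M * offdiag_sum (\<lambda>i j. \<bar>K$i$j\<bar>) \<le> trace (S ** K)"
proof -
  have "m * trace K \<le> (\<Sum>i\<in>UNIV. S$i$i * K$i$i)"
    unfolding trace_def sum_distrib_left
    using m psd_mat_diag_nonneg[OF K] by (intro sum_mono mult_right_mono) auto
  moreover have "- (M * offdiag_sum (\<lambda>i j. \<bar>K$i$j\<bar>)) \<le> offdiag_sum (\<lambda>i j. S$i$j * K$i$j)"
  proof -
    have "- (M * \<bar>K$i$j\<bar>) \<le> S$i$j * K$i$j" for i j
    proof -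
      have "\<bar>S$i$j * K$i$j\<bar> \<le> M * \<bar>K$i$j\<bar>"
        using M[of i j] by (simp add: abs_mult mult_right_mono)
      then show ?thesis by linarith
    qed
    then show ?thesis by (simp add: sum_distrib_left sum_negf[symmetric] sum_mono)
  qed
  ultimately show ?thesis
    using trace_mult_eq_diag_offdiag[OF psd_mat_sym[OF K], of S] by linarith
qed

text \<open>Since \<open>K\<close> is positive semidefinite, \<open>v\<^sup>T K v \<ge> 0\<close> for \<open>v\<^sub>i = \<surd>S\<^sub>i\<^sub>i\<close>; subtracting
  \<open>tr(SK)\<close> leaves only the off-diagonal gaps \<open>\<surd>(S\<^sub>i\<^sub>i S\<^sub>j\<^sub>j) - S\<^sub>i\<^sub>j\<close>.\<close>

lemma trace_mult_ge_offdiag_gap: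
  fixes S K :: "real^'n^'n"
  assumes K: "psd_mat K" and S: "\<And>i. 0 \<le> S$i$i"
  shows "offdiag_sum (\<lambda>i j. (sqrt (S$i$i * S$j$j) - S$i$j) * - K$i$j) \<le> trace (S ** K)"
proof -
  define v :: "real^'n" where "v = (\<chi> i. sqrt (S$i$i))"
  have "v$i * v$i = S$i$i" for i using S[of i] by (simp add: v_def)
  moreover have "v$i * v$j = sqrt (S$i$i * S$j$j)" for i j by (simp add: v_def real_sqrt_mult)
  ultimately have "bilin_form K v v = (\<Sum>i\<in>UNIV. S$i$i * K$i$i)
      + offdiag_sum (\<lambda>i j. sqrt (S$i$i * S$j$j) * K$i$j)"
    unfolding bilin_form_self_eq_diag_offdiag by simp
  moreover have "0 \<le> bilin_form K v v" using K by (simp add: psd_mat_iff)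
  moreover have "offdiag_sum (\<lambda>i j. (sqrt (S$i$i * S$j$j) - S$i$j) * - K$i$j)
      = offdiag_sum (\<lambda>i j. S$i$j * K$i$j) - offdiag_sum (\<lambda>i j. sqrt (S$i$i * S$j$j) * K$i$j)"
    by (simp add: algebra_simps sum_subtractf)
  ultimately show ?thesis
    using trace_mult_eq_diag_offdiag[OF psd_mat_sym[OF K], of S] by linarith
qed

lemma trace_mult_ge_offdiag_parts:
  fixes S K :: "real^'n^'n"
  assumes K: "psd_mat K" and S: "\<And>i. 0 \<le> S$i$i"
    and e: "\<And>i j. i \<noteq> j \<Longrightarrow> e \<le> sqrt (S$i$i * S$j$j) - S$i$j"
    and E: "\<And>i j. sqrt (S$i$i * S$j$j) - S$i$j \<le> E" and "0 \<le> e"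
  shows "e * offdiag_sum (\<lambda>i j. max 0 (- K$i$j)) - E * offdiag_sum (\<lambda>i j. max 0 (K$i$j))
    \<le> trace (S ** K)"
proof -
  have "e * max 0 (- K$i$j) - E * max 0 (K$i$j) \<le> (sqrt (S$i$i * S$j$j) - S$i$j) * - K$i$j"
    if "i \<noteq> j" for i j
    using e[OF that] E[of i j] \<open>0 \<le> e\<close>
    by (cases "K$i$j \<ge> 0") (auto simp: mult_left_mono mult_right_mono)
  then have "e * offdiag_sum (\<lambda>i j. max 0 (- K$i$j)) - E * offdiag_sum (\<lambda>i j. max 0 (K$i$j))
      \<le> offdiag_sum (\<lambda>i j. (sqrt (S$i$i * S$j$j) - S$i$j) * - K$i$j)"
    unfolding sum_distrib_left sum_subtractf[symmetric] by (intro sum_mono) auto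
  also have "\<dots> \<le> trace (S ** K)" by (rule trace_mult_ge_offdiag_gap[OF K S])
  finally show ?thesis .
qed

lemma ex_pos_lower_bound_finite:
  fixes f :: "'a \<Rightarrow> real"
  assumes "finite A" "\<And>x. x \<in> A \<Longrightarrow> 0 < f x"
  shows "\<exists>r>0. \<forall>x\<in>A. r \<le> f x"
  using assms by (intro exI[of _ "Min (insert 1 (f ` A))"]) simp

lemma ex_pos_upper_bound_finite:
  fixes f :: "'a \<Rightarrow> real"
  assumes "finite A"
  shows "\<exists>r>0. \<forall>x\<in>A. f x \<le> r"
  using assms by (intro exI[of _ "Max (insert 1 (f ` A))"]) (simp add: Max_gr_iff)

text \<open>Eliminating the negative off-diagonal mass \<open>N\<close> between the two lower bounds
  \<open>m T - M (P + N) \<le> x\<close> and \<open>e N - E P \<le> x\<close> on \<open>x = tr(SK)\<close>.\<close>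

lemma coercivity_from_two_bounds:
  fixes m M e E \<rho> :: real
  assumes "0 < m" "0 < M" "0 < e" "0 \<le> E" "0 < \<rho>"
  obtains \<alpha> where "0 < \<alpha>" "\<And>x T P N. 0 \<le> x \<Longrightarrow> 0 \<le> P \<Longrightarrow> 0 \<le> N \<Longrightarrow>
    m * T - M * (P + N) \<le> x \<Longrightarrow> e * N - E * P \<le> x \<Longrightarrow> \<alpha> * T \<le> x + \<rho> * P"
proof
  define a where "a = 1 + M / e"
  define b where "b = M * (1 + E / e)"
  define c where "c = a + b / \<rho>"
  have "a > 0" unfolding a_def using assms by (intro add_pos_pos divide_pos_pos) auto
  have "b \<ge> 0" unfolding b_def using assms by (intro mult_nonneg_nonneg add_nonneg_nonneg) auto
  have "c > 0" unfolding c_def using \<open>a > 0\<close> \<open>b \<ge> 0\<close> assms by (simp add: add_pos_nonneg)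
  then show "0 < m / c" using assms by simp
  fix x T P N :: real
  assume x: "0 \<le> x" and P: "0 \<le> P" and N: "0 \<le> N"
    and b2: "m * T - M * (P + N) \<le> x" and b3: "e * N - E * P \<le> x"
  have "M * (e * N) \<le> M * (x + E * P)"
    using b3 assms by (intro mult_left_mono) auto
  then have "M * N \<le> (M / e) * (x + E * P)"
    using assms by (simp add: field_simps)
  then have "m * T \<le> a * x + b * P"
    using b2 unfolding a_def b_def by (simp add: algebra_simps)
  also have "\<dots> \<le> a * x + b * P + (a * \<rho> * P + b / \<rho> * x)"
    using x P assms \<open>a > 0\<close> \<open>b \<ge> 0\<close> by simp
  also have "\<dots> = c * (x + \<rho> * P)"
    unfolding c_def using assms by (simp add: algebra_simps)
  finally show "m / c * T \<le> x + \<rho> * P"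
    using \<open>c > 0\<close> by (simp add: pos_divide_le_eq mult.commute)
qed

lemma trace_mult_coercive:
  fixes S :: "real^'n^'n"
  assumes S: "psd_mat S" "\<forall>i. 0 < S$i$i" "\<forall>i j. i \<noteq> j \<longrightarrow> S$i$j < sqrt (S$i$i * S$j$j)"
    and "0 < \<rho>"
  obtains \<alpha> where "0 < \<alpha>"
    "\<And>K. psd_mat K \<Longrightarrow> \<alpha> * trace K \<le> trace (S ** K) + \<rho> * offdiag_sum (\<lambda>i j. max 0 (K$i$j))"
proof -
  define gap where "gap i j = sqrt (S$i$i * S$j$j) - S$i$j" for i j
  obtain m where "0 < m" and m: "\<And>i. m \<le> S$i$i"
    using ex_pos_lower_bound_finite[of UNIV "\<lambda>i. S$i$i"] S(2) by auto
  have "\<exists>e>0. \<forall>p\<in>{p. fst p \<noteq> snd p}. e \<le> gap (fst p) (snd p)"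
    by (rule ex_pos_lower_bound_finite) (use S(3) in \<open>auto simp: gap_def\<close>)
  then obtain e where "0 < e" and e: "\<And>i j. i \<noteq> j \<Longrightarrow> e \<le> gap i j" by force
  have "\<exists>M>0. \<forall>p\<in>UNIV. \<bar>S$fst p$snd p\<bar> \<le> M" by (rule ex_pos_upper_bound_finite) simp
  then obtain M where "0 < M" and M: "\<And>i j. \<bar>S$i$j\<bar> \<le> M" by force
  have "\<exists>E>0. \<forall>p\<in>UNIV. gap (fst p) (snd p) \<le> E" by (rule ex_pos_upper_bound_finite) simp
  then obtain E where "0 < E" and E: "\<And>i j. gap i j \<le> E" by force
  obtain \<alpha> where "0 < \<alpha>" and \<alpha>: "\<And>x T P N. 0 \<le> x \<Longrightarrow> 0 \<le> P \<Longrightarrow> 0 \<le> N \<Longrightarrow>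
      m * T - M * (P + N) \<le> x \<Longrightarrow> e * N - E * P \<le> x \<Longrightarrow> \<alpha> * T \<le> x + \<rho> * P"
    using coercivity_from_two_bounds \<open>0 < m\<close> \<open>0 < M\<close> \<open>0 < e\<close> \<open>0 < E\<close> \<open>0 < \<rho>\<close>
    by (metis less_imp_le)
  show thesis
  proof (rule that[OF \<open>0 < \<alpha>\<close>])
    fix K :: "real^'n^'n" assume K: "psd_mat K"
    define P where "P = offdiag_sum (\<lambda>i j. max 0 (K$i$j))"
    define N where "N = offdiag_sum (\<lambda>i j. max 0 (- K$i$j))"
    have abs_split: "\<bar>k\<bar> = max 0 k + max 0 (- k)" for k :: real by (auto simp: max_def)
    have "offdiag_sum (\<lambda>i j. \<bar>K$i$j\<bar>) = P + N"
      unfolding P_def N_def abs_split by (simp add: sum.distrib)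
    then have "m * trace K - M * (P + N) \<le> trace (S ** K)"
      using trace_mult_ge_diag_offdiag[OF K m M] by simp
    moreover have "e * N - E * P \<le> trace (S ** K)"
      unfolding P_def N_def
      using trace_mult_ge_offdiag_parts[OF K _ e[unfolded gap_def] E[unfolded gap_def]]
        S(2) \<open>0 < e\<close> by (simp add: less_imp_le)
    moreover have "0 \<le> P" "0 \<le> N" unfolding P_def N_def by (auto intro!: sum_nonneg)
    ultimately show "\<alpha> * trace K \<le> trace (S ** K) + \<rho> * P"
      using \<alpha> trace_mult_psd_nonneg[OF S(1) K] by blast
  qed
qed

section \<open>Minimizing \<open>- log det K\<close> plus a coercive convex term\<close>

lemma continuous_on_det: "continuous_on A (det :: real^'n^'n \<Rightarrow> real)"
proof -
  have "continuous_on A (\<lambda>K::real^'n^'n. det K)" unfolding det_def by (intro continuous_intros)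
  then show ?thesis by simp
qed

lemma closed_psd_mat: "closed {K :: real^'n^'n. psd_mat K}"
  unfolding psd_mat_iff sym_mat_def
  by (intro closed_Collect_conj closed_Collect_all closed_Collect_eq closed_Collect_le
      continuous_on_bilin_form_matrix continuous_intros)

lemma pd_mat_trace_pos: "pd_mat K \<Longrightarrow> 0 < trace K"
  unfolding trace_def
  by (intro sum_pos) (auto dest: pd_mat_pos[of K "axis _ 1"] simp: bilin_form_axis)

lemma ln_det_le_ln_trace:
  fixes K :: "real^'n^'n"
  assumes K: "pd_mat K"
  shows "ln (det K) \<le> ln (fact CARD('n)) + CARD('n) * ln (trace K)"
proof -
  have "det K \<le> fact CARD('n) * trace K ^ CARD('n)"
    using abs_det_le_fact_mult_power[of K "trace K"]
      psd_mat_abs_entry_le_trace[OF pd_imp_psd_mat[OF K]] by force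
  then have "ln (det K) \<le> ln (fact CARD('n) * trace K ^ CARD('n))"
    using pd_mat_det_pos[OF K] by simp
  also have "\<dots> = ln (fact CARD('n)) + CARD('n) * ln (trace K)"
    using pd_mat_trace_pos[OF K] by (simp add: ln_mult ln_realpow)
  finally show ?thesis .
qed

lemma bound_of_linear_le_log:
  fixes a b c T :: real
  assumes "0 < a" "0 < b" "0 < T" and le: "a * T \<le> c + b * ln T"
  shows "T \<le> 2 * (c + b * ln (2 * b / a)) / a"
proof -
  define y where "y = a * T / (2 * b)"
  have "y > 0" unfolding y_def using assms by simp
  have "T = (2 * b / a) * y" unfolding y_def using assms by simp
  moreover have "ln ((2 * b / a) * y) = ln (2 * b / a) + ln y"
    using assms \<open>y > 0\<close> by (intro ln_mult_pos) auto
  ultimately have "ln T = ln (2 * b / a) + ln y" by (simp only:)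
  also have "\<dots> \<le> ln (2 * b / a) + y" using ln_le_minus_one[OF \<open>y > 0\<close>] by simp
  finally have "b * ln T \<le> b * (ln (2 * b / a) + y)"
    using \<open>0 < b\<close> by (simp add: mult_left_mono)
  also have "\<dots> = b * ln (2 * b / a) + a * T / 2"
    unfolding y_def using \<open>0 < b\<close> by (simp add: field_simps)
  finally have "b * ln T \<le> b * ln (2 * b / a) + a * T / 2" .
  then show ?thesis using le \<open>0 < a\<close> by (simp add: field_simps)
qed

lemma neg_ln_det_sublevel_bounds:
  fixes K :: "real^'n^'n"
  assumes K: "pd_mat K" and "0 < \<alpha>" and coercive: "\<alpha> * trace K \<le> g"
    and sublevel: "- ln (det K) + g \<le> c"
  shows "trace K \<le> 2 * (c + ln (fact CARD('n)) + CARD('n) * ln (2 * CARD('n) / \<alpha>)) / \<alpha>"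
    and "exp (- c) \<le> det K"
proof -
  have "0 \<le> \<alpha> * trace K" using pd_mat_trace_pos[OF K] \<open>0 < \<alpha>\<close> by simp
  then have "0 \<le> g" using coercive by linarith
  then have "- c \<le> ln (det K)" using sublevel by simp
  then show "exp (- c) \<le> det K" using pd_mat_det_pos[OF K] by (metis exp_le_cancel_iff exp_ln)
  have "\<alpha> * trace K \<le> (c + ln (fact CARD('n))) + CARD('n) * ln (trace K)"
    using coercive sublevel ln_det_le_ln_trace[OF K] by simp
  from bound_of_linear_le_log[OF \<open>0 < \<alpha>\<close> _ pd_mat_trace_pos[OF K] this]
  show "trace K \<le> 2 * (c + ln (fact CARD('n)) + CARD('n) * ln (2 * CARD('n) / \<alpha>)) / \<alpha>"
    by simp
qed

lemma bounded_entries_imp_bounded: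
  assumes "\<And>K i j. K \<in> C \<Longrightarrow> \<bar>K$i$j\<bar> \<le> R"
  shows "bounded (C :: (real^'n^'n) set)"
  unfolding bounded_iff
proof (intro exI ballI)
  fix K assume "K \<in> C"
  have "norm K \<le> (\<Sum>i\<in>UNIV. norm (K$i))"
    unfolding norm_vec_def by (rule L2_set_le_sum) simp
  also have "\<dots> \<le> (\<Sum>i\<in>(UNIV::'n set). \<Sum>j\<in>(UNIV::'n set). R)"
  proof (intro sum_mono)
    fix i
    have "norm (K$i) \<le> (\<Sum>j\<in>UNIV. \<bar>K$i$j\<bar>)" by (rule norm_le_l1_cart)
    also have "\<dots> \<le> (\<Sum>j\<in>(UNIV::'n set). R)" using \<open>K \<in> C\<close> assms by (intro sum_mono) auto
    finally show "norm (K$i) \<le> (\<Sum>j\<in>(UNIV::'n set). R)" .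
  qed
  finally show "norm K \<le> (\<Sum>i\<in>(UNIV::'n set). \<Sum>j\<in>(UNIV::'n set). R)" .
qed

lemma compact_psd_bounded_entries_det_ge:
  assumes "closed F"
  shows "compact (F \<inter> {K. psd_mat K} \<inter> {K. \<forall>i j. \<bar>K$i$j\<bar> \<le> R} \<inter> {K :: real^'n^'n. d \<le> det K})"
  unfolding compact_eq_bounded_closed
proof
  show "bounded (F \<inter> {K. psd_mat K} \<inter> {K. \<forall>i j. \<bar>K$i$j\<bar> \<le> R} \<inter> {K. d \<le> det K})"
    by (rule bounded_entries_imp_bounded) auto
  show "closed (F \<inter> {K. psd_mat K} \<inter> {K. \<forall>i j. \<bar>K$i$j\<bar> \<le> R} \<inter> {K. d \<le> det K})"
    using assms closed_psd_mat
    by (intro closed_Int closed_Collect_all closed_Collect_le continuous_on_det continuous_intros)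
qed

text \<open>The sublevel set of the identity is compact: the trace bound controls all entries, and
  the determinant stays away from \<open>0\<close>, where \<open>- log det\<close> blows up.\<close>

lemma ex_min_neg_ln_det_plus_coercive:
  fixes g :: "real^'n^'n \<Rightarrow> real"
  assumes F: "closed F" "mat 1 \<in> F" and g: "continuous_on UNIV g" and "0 < \<alpha>"
    and coercive: "\<And>K. K \<in> F \<Longrightarrow> psd_mat K \<Longrightarrow> \<alpha> * trace K \<le> g K"
  obtains K0 where "K0 \<in> F" "pd_mat K0"
    "\<And>K. K \<in> F \<Longrightarrow> pd_mat K \<Longrightarrow> - ln (det K0) + g K0 \<le> - ln (det K) + g K"
proof -
  define h where "h K = - ln (det K) + g K" for K :: "real^'n^'n"
  define c where "c = h (mat 1)"
  define R where "R = max 1 (2 * (c + ln (fact CARD('n)) + CARD('n) * ln (2 * CARD('n) / \<alpha>)) / \<alpha>)"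
  define C where "C = F \<inter> {K. psd_mat K} \<inter> {K. \<forall>i j. \<bar>K$i$j\<bar> \<le> R} \<inter> {K. exp (- c) \<le> det K}"
  have sublevel_C: "K \<in> C" if "K \<in> F" "pd_mat K" "h K \<le> c" for K
  proof -
    have "psd_mat K" using that(2) by (rule pd_imp_psd_mat)
    note bounds = neg_ln_det_sublevel_bounds[OF that(2) \<open>0 < \<alpha>\<close>
        coercive[OF that(1) \<open>psd_mat K\<close>] that(3)[unfolded h_def]]
    have "\<bar>K$i$j\<bar> \<le> R" for i j
      using psd_mat_abs_entry_le_trace[OF \<open>psd_mat K\<close>, of i j] bounds(1)
      unfolding R_def by linarith
    then show ?thesis using that(1) \<open>psd_mat K\<close> bounds(2) unfolding C_def by blast
  qed
  have det_C: "0 < det K" if "K \<in> C" for K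
    using that unfolding C_def by (auto intro: less_le_trans[OF exp_gt_zero])
  have "mat 1 \<in> C" using F(2) pd_mat_1 by (intro sublevel_C) (auto simp: c_def)
  have "compact C" unfolding C_def using F(1) by (rule compact_psd_bounded_entries_det_ge)
  have "\<forall>K\<in>C. det K \<noteq> 0" using det_C by force
  then have "continuous_on C h"
    unfolding h_def
    by (intro continuous_intros continuous_on_det continuous_on_subset[OF g]) auto
  then obtain K0 where "K0 \<in> C" and K0_min: "\<And>K. K \<in> C \<Longrightarrow> h K0 \<le> h K"
    using continuous_attains_inf[OF \<open>compact C\<close>] \<open>mat 1 \<in> C\<close> by blast
  show thesis
  proof
    show "K0 \<in> F" using \<open>K0 \<in> C\<close> unfolding C_def by blast
    show "pd_mat K0"
      using \<open>K0 \<in> C\<close> det_C[OF \<open>K0 \<in> C\<close>] unfolding C_def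
      by (auto intro: psd_det_nonzero_imp_pd_mat)
    fix K assume "K \<in> F" "pd_mat K"
    have "h K0 \<le> h K"
    proof (cases "h K \<le> c")
      case True
      then show ?thesis using K0_min sublevel_C[OF \<open>K \<in> F\<close> \<open>pd_mat K\<close>] by blast
    next
      case False
      then show ?thesis using K0_min[OF \<open>mat 1 \<in> C\<close>] unfolding c_def by linarith
    qed
    then show "- ln (det K0) + g K0 \<le> - ln (det K) + g K" unfolding h_def .
  qed
qed

lemma neg_ln_det_plus_convex_min_unique:
  fixes g :: "real^'n^'n \<Rightarrow> real"
  assumes mid_F: "\<And>A B. A \<in> F \<Longrightarrow> B \<in> F \<Longrightarrow> (1/2) *\<^sub>R (A + B) \<in> F"
    and mid_g: "\<And>A B. A \<in> F \<Longrightarrow> B \<in> F \<Longrightarrow> g ((1/2) *\<^sub>R (A + B)) \<le> (g A + g B) / 2"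
    and K1: "K1 \<in> F" "pd_mat K1"
      "\<And>K. K \<in> F \<Longrightarrow> pd_mat K \<Longrightarrow> - ln (det K1) + g K1 \<le> - ln (det K) + g K"
    and K2: "K2 \<in> F" "pd_mat K2"
      "\<And>K. K \<in> F \<Longrightarrow> pd_mat K \<Longrightarrow> - ln (det K2) + g K2 \<le> - ln (det K) + g K"
  shows "K1 = K2"
proof (rule ccontr)
  assume "K1 \<noteq> K2"
  define M where "M = (1/2) *\<^sub>R (K1 + K2)"
  have "M \<in> F" "pd_mat M" unfolding M_def using K1 K2 mid_F pd_mat_midpoint by auto
  have "- ln (det M) + g M < (- ln (det K1) + g K1 + (- ln (det K2) + g K2)) / 2"
    using neg_ln_det_midpoint_strict[OF K1(2) K2(2) \<open>K1 \<noteq> K2\<close>] mid_g[OF K1(1) K2(1)]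
    unfolding M_def by simp
  also have "\<dots> \<le> - ln (det M) + g M"
    using K1(3)[OF \<open>M \<in> F\<close> \<open>pd_mat M\<close>] K2(3)[OF \<open>M \<in> F\<close> \<open>pd_mat M\<close>] by simp
  finally show False by simp
qed

section \<open>The penalty with extended-real bounds\<close>

text \<open>For \<open>l \<le> 0 < u\<close> the term \<open>max (l k) (u k)\<close> is \<open>\<infinity>\<close> exactly when an infinite bound meets
  an entry \<open>k\<close> of the excluded sign; otherwise it equals \<open>entry_penalty l u k\<close>, in which
  \<open>real_of_ereal\<close> sends an infinite bound to \<open>0\<close> on the inactive side of the maximum.\<close>

definition entry_feasible :: "ereal \<Rightarrow> ereal \<Rightarrow> real \<Rightarrow> bool" where
  "entry_feasible l u k \<longleftrightarrow> (u = \<infinity> \<longrightarrow> k \<le> 0) \<and> (l = -\<infinity> \<longrightarrow> 0 \<le> k)"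

definition entry_penalty :: "ereal \<Rightarrow> ereal \<Rightarrow> real \<Rightarrow> real" where
  "entry_penalty l u k = max (real_of_ereal l * k) (real_of_ereal u * k)"

lemma max_mult_ereal_feasible:
  assumes "l \<le> 0" "0 < u" "entry_feasible l u k"
  shows "max (l * ereal k) (u * ereal k) = ereal (entry_penalty l u k)"
  using assms unfolding entry_penalty_def entry_feasible_def
  by (cases l; cases u; cases "k > 0"; cases "k = 0") (auto simp: max_def mult_le_0_iff)

lemma max_mult_ereal_infeasible:
  assumes "l \<le> 0" "0 < u" "\<not> entry_feasible l u k"
  shows "max (l * ereal k) (u * ereal k) = \<infinity>"
  using assms unfolding entry_feasible_def
  by (cases l; cases u; cases "k > 0"; cases "k = 0") (auto simp: max_def)

lemma entry_penalty_ge_pos_part: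
  assumes "l \<le> 0" "ereal \<rho> \<le> u" "0 < \<rho>" "entry_feasible l u k"
  shows "\<rho> * max 0 k \<le> entry_penalty l u k"
proof (cases "0 \<le> k")
  case True
  have "ereal (\<rho> * k) = ereal \<rho> * ereal k" by simp
  also have "\<dots> \<le> u * ereal k" using assms(2) True by (intro ereal_mult_right_mono) auto
  also have "\<dots> \<le> max (l * ereal k) (u * ereal k)" by simp
  also have "\<dots> = ereal (entry_penalty l u k)"
    using assms by (intro max_mult_ereal_feasible) (auto intro: less_le_trans[of 0 "ereal \<rho>"])
  finally show ?thesis using True by simp
next
  case False
  have "real_of_ereal l \<le> 0" using assms(1) by (cases l) auto
  then have "0 \<le> real_of_ereal l * k" using False by (simp add: mult_nonpos_nonpos)
  then show ?thesis using False unfolding entry_penalty_def by simp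
qed

lemma entry_penalty_midpoint:
  "entry_penalty l u ((x + y) / 2) \<le> (entry_penalty l u x + entry_penalty l u y) / 2"
  unfolding entry_penalty_def by (simp add: max_def field_simps)

definition feasible :: "ereal^'n^'n \<Rightarrow> ereal^'n^'n \<Rightarrow> real^'n^'n \<Rightarrow> bool" where
  "feasible L U K \<longleftrightarrow> (\<forall>i j. i \<noteq> j \<longrightarrow> entry_feasible (L$i$j) (U$i$j) (K$i$j))"

definition penalty :: "ereal^'n^'n \<Rightarrow> ereal^'n^'n \<Rightarrow> real^'n^'n \<Rightarrow> real" where
  "penalty L U K = offdiag_sum (\<lambda>i j. entry_penalty (L$i$j) (U$i$j) (K$i$j))"

definition gen_glasso_obj_real ::
  "real^'n^'n \<Rightarrow> ereal^'n^'n \<Rightarrow> ereal^'n^'n \<Rightarrow> real^'n^'n \<Rightarrow> real" where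
  "gen_glasso_obj_real S L U K = - ln (det K) + (trace (S ** K) + penalty L U K)"

lemma gen_glasso_obj_feasible:
  assumes L: "\<forall>i j. L$i$j \<le> 0" and U: "\<forall>i j. i \<noteq> j \<longrightarrow> 0 < U$i$j" and "feasible L U K"
  shows "gen_glasso_obj S L U K = ereal (gen_glasso_obj_real S L U K)"
proof -
  have "max (L$i$j * ereal (K$i$j)) (U$i$j * ereal (K$i$j))
      = ereal (entry_penalty (L$i$j) (U$i$j) (K$i$j))" if "i \<noteq> j" for i j
    using max_mult_ereal_feasible L U \<open>feasible L U K\<close> that unfolding feasible_def by blast
  then show ?thesis unfolding gen_glasso_obj_def gen_glasso_obj_real_def penalty_def
    by (simp add: add.assoc)
qed

lemma gen_glasso_obj_infeasible:
  assumes L: "\<forall>i j. L$i$j \<le> 0" and U: "\<forall>i j. i \<noteq> j \<longrightarrow> 0 < U$i$j" and "\<not> feasible L U K"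
  shows "gen_glasso_obj S L U K = \<infinity>"
proof -
  obtain i j where "i \<noteq> j" and "\<not> entry_feasible (L$i$j) (U$i$j) (K$i$j)"
    using \<open>\<not> feasible L U K\<close> unfolding feasible_def by blast
  then have "max (L$i$j * ereal (K$i$j)) (U$i$j * ereal (K$i$j)) = \<infinity>"
    using max_mult_ereal_infeasible L U by blast
  then have "(\<Sum>j\<in>UNIV - {i}. max (L$i$j * ereal (K$i$j)) (U$i$j * ereal (K$i$j))) = \<infinity>"
    using \<open>i \<noteq> j\<close> by (subst sum_Pinfty) auto
  then have "offdiag_sum (\<lambda>i j. max (L$i$j * ereal (K$i$j)) (U$i$j * ereal (K$i$j))) = \<infinity>"
    by (subst sum_Pinfty) auto
  then show ?thesis unfolding gen_glasso_obj_def by simp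
qed

lemma feasible_mat_1: "feasible L U (mat 1)"
  unfolding feasible_def entry_feasible_def by (simp add: mat_def)

lemma gen_glasso_obj_minimizer_iff:
  fixes K :: "real^'n^'n"
  assumes L: "\<forall>i j. L$i$j \<le> 0" and U: "\<forall>i j. i \<noteq> j \<longrightarrow> 0 < U$i$j"
  shows "(\<forall>K'. pd_mat K' \<longrightarrow> gen_glasso_obj S L U K \<le> gen_glasso_obj S L U K') \<longleftrightarrow>
    feasible L U K \<and>
    (\<forall>K'. feasible L U K' \<longrightarrow> pd_mat K' \<longrightarrow> gen_glasso_obj_real S L U K \<le> gen_glasso_obj_real S L U K')"
    (is "?min \<longleftrightarrow> ?feasible_min")
proof
  assume ?min
  then have "gen_glasso_obj S L U K \<le> gen_glasso_obj S L U (mat 1)" using pd_mat_1 by blast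
  then have "gen_glasso_obj S L U K \<noteq> \<infinity>"
    using gen_glasso_obj_feasible[OF L U feasible_mat_1] by auto
  then have "feasible L U K" using gen_glasso_obj_infeasible[OF L U] by blast
  moreover have "gen_glasso_obj_real S L U K \<le> gen_glasso_obj_real S L U K'"
    if "feasible L U K'" "pd_mat K'" for K' :: "real^'n^'n"
  proof -
    have "gen_glasso_obj S L U K \<le> gen_glasso_obj S L U K'" using \<open>?min\<close> that(2) by blast
    then show ?thesis using that(1) \<open>feasible L U K\<close> by (simp add: gen_glasso_obj_feasible[OF L U])
  qed
  ultimately show ?feasible_min by blast
next
  assume ?feasible_min
  show ?min
  proof (intro allI impI)
    fix K' :: "real^'n^'n" assume "pd_mat K'"
    show "gen_glasso_obj S L U K \<le> gen_glasso_obj S L U K'"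
    proof (cases "feasible L U K'")
      case True
      then show ?thesis
        using \<open>?feasible_min\<close> \<open>pd_mat K'\<close> by (simp add: gen_glasso_obj_feasible[OF L U])
    qed (simp add: gen_glasso_obj_infeasible[OF L U])
  qed
qed

lemma closed_feasible: "closed {K :: real^'n^'n. feasible L U K}"
  unfolding feasible_def entry_feasible_def
  by (intro closed_Collect_all closed_Collect_imp closed_Collect_conj closed_Collect_le
      open_Collect_const continuous_intros)

lemma continuous_on_penalty: "continuous_on A (penalty L U)"
  unfolding penalty_def entry_penalty_def by (intro continuous_intros)

lemma entry_feasible_midpoint:
  "entry_feasible l u x \<Longrightarrow> entry_feasible l u y \<Longrightarrow> entry_feasible l u ((x + y) / 2)"
  unfolding entry_feasible_def by auto

lemma feasible_midpoint:
  "feasible L U A \<Longrightarrow> feasible L U B \<Longrightarrow> feasible L U ((1/2) *\<^sub>R (A + B))"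
  unfolding feasible_def using entry_feasible_midpoint by (fastforce simp: add_divide_distrib)

lemma penalty_midpoint:
  "penalty L U ((1/2) *\<^sub>R (A + B)) \<le> (penalty L U A + penalty L U B) / 2"
proof -
  have "penalty L U ((1/2) *\<^sub>R (A + B))
      \<le> offdiag_sum (\<lambda>i j. (entry_penalty (L$i$j) (U$i$j) (A$i$j)
                              + entry_penalty (L$i$j) (U$i$j) (B$i$j)) / 2)"
    unfolding penalty_def using entry_penalty_midpoint by (simp add: add_divide_distrib sum_mono)
  also have "\<dots> = (penalty L U A + penalty L U B) / 2"
    unfolding penalty_def by (simp add: sum.distrib sum_divide_distrib[symmetric] add_divide_distrib)
  finally show ?thesis .
qed

lemma trace_mult_midpoint:
  fixes S A B :: "real^'n^'n"
  shows "trace (S ** ((1/2) *\<^sub>R (A + B))) = (trace (S ** A) + trace (S ** B)) / 2"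
proof -
  have "trace (S ** ((1/2) *\<^sub>R (A + B)))
      = (\<Sum>i\<in>UNIV. \<Sum>k\<in>UNIV. (S$i$k * A$k$i + S$i$k * B$k$i) / 2)"
    unfolding trace_def matrix_matrix_mult_def by (simp add: algebra_simps add_divide_distrib)
  also have "\<dots> = (trace (S ** A) + trace (S ** B)) / 2"
    unfolding trace_def matrix_matrix_mult_def
    by (simp only: add_divide_distrib sum.distrib sum_divide_distrib[symmetric] vec_lambda_beta)
  finally show ?thesis .
qed

lemma penalty_ge_pos_part:
  assumes L: "\<forall>i j. L$i$j \<le> 0" and \<rho>: "0 < \<rho>" "\<And>i j. i \<noteq> j \<Longrightarrow> ereal \<rho> \<le> U$i$j"
    and "feasible L U K"
  shows "\<rho> * offdiag_sum (\<lambda>i j. max 0 (K$i$j)) \<le> penalty L U K"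
  unfolding penalty_def sum_distrib_left
  using entry_penalty_ge_pos_part L \<rho> \<open>feasible L U K\<close> unfolding feasible_def
  by (intro sum_mono) auto

lemma ex_pos_lower_bound_offdiag:
  fixes U :: "ereal^'n^'n"
  assumes "\<forall>i j. i \<noteq> j \<longrightarrow> 0 < U$i$j"
  obtains \<rho> :: real where "0 < \<rho>" "\<And>i j. i \<noteq> j \<Longrightarrow> ereal \<rho> \<le> U$i$j"
proof -
  have "0 < real_of_ereal (min 1 (U$i$j))" if "i \<noteq> j" for i j
  proof -
    have "0 < U$i$j" using assms that by blast
    then show ?thesis by (cases "U$i$j") (auto simp: min_def)
  qed
  then have "\<exists>\<rho>>0. \<forall>p\<in>{p. fst p \<noteq> snd p}. \<rho> \<le> real_of_ereal (min 1 (U$fst p$snd p))"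
    by (intro ex_pos_lower_bound_finite) auto
  then obtain \<rho> where "0 < \<rho>" and \<rho>: "\<And>i j. i \<noteq> j \<Longrightarrow> \<rho> \<le> real_of_ereal (min 1 (U$i$j))"
    by force
  show thesis
  proof (rule that[OF \<open>0 < \<rho>\<close>])
    fix i j :: 'n assume "i \<noteq> j"
    then have "0 < U$i$j" using assms by blast
    then show "ereal \<rho> \<le> U$i$j"
      using \<rho>[OF \<open>i \<noteq> j\<close>] by (cases "U$i$j") (auto simp: min_def split: if_splits)
  qed
qed

lemma trace_mult_plus_penalty_coercive:
  fixes S :: "real^'n^'n" and L U :: "ereal^'n^'n"
  assumes S: "psd_mat S" "\<forall>i. 0 < S$i$i" "\<forall>i j. i \<noteq> j \<longrightarrow> S$i$j < sqrt (S$i$i * S$j$j)"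
    and L: "\<forall>i j. L$i$j \<le> 0" and U: "\<forall>i j. i \<noteq> j \<longrightarrow> 0 < U$i$j"
  shows "\<exists>\<alpha>>0. \<forall>K. feasible L U K \<longrightarrow> psd_mat K \<longrightarrow>
    \<alpha> * trace K \<le> trace (S ** K) + penalty L U K"
proof -
  obtain \<rho> where "0 < \<rho>" and \<rho>: "\<And>i j. i \<noteq> j \<Longrightarrow> ereal \<rho> \<le> U$i$j"
    using ex_pos_lower_bound_offdiag[OF U] by blast
  obtain \<alpha> where "0 < \<alpha>" and \<alpha>: "\<And>K. psd_mat K \<Longrightarrow>
      \<alpha> * trace K \<le> trace (S ** K) + \<rho> * offdiag_sum (\<lambda>i j. max 0 (K$i$j))"
    using trace_mult_coercive[OF S \<open>0 < \<rho>\<close>] by blast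
  have "\<alpha> * trace K \<le> trace (S ** K) + penalty L U K" if "feasible L U K" "psd_mat K" for K
    using \<alpha>[OF that(2)] penalty_ge_pos_part[OF L \<open>0 < \<rho>\<close> \<rho> that(1)] by linarith
  then show ?thesis using \<open>0 < \<alpha>\<close> by blast
qed

theorem gen_glasso_unique_minimizer:
  fixes S :: "real^'n^'n" and L U :: "ereal^'n^'n"
  assumes S: "psd_mat S" "\<forall>i. 0 < S$i$i" "\<forall>i j. i \<noteq> j \<longrightarrow> S$i$j < sqrt (S$i$i * S$j$j)"
    and L: "\<forall>i j. L$i$j \<le> 0" and U: "\<forall>i j. i \<noteq> j \<longrightarrow> 0 < U$i$j"
  shows "\<exists>!K. pd_mat K \<and> (\<forall>K'. pd_mat K' \<longrightarrow> gen_glasso_obj S L U K \<le> gen_glasso_obj S L U K')"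
proof -
  define F where "F = {K :: real^'n^'n. feasible L U K}"
  define g where "g K = trace (S ** K) + penalty L U K" for K
  have obj_real: "gen_glasso_obj_real S L U K = - ln (det K) + g K" for K
    unfolding gen_glasso_obj_real_def g_def ..
  have min_iff: "(\<forall>K'. pd_mat K' \<longrightarrow> gen_glasso_obj S L U K \<le> gen_glasso_obj S L U K') \<longleftrightarrow>
      K \<in> F \<and> (\<forall>K'. K' \<in> F \<longrightarrow> pd_mat K' \<longrightarrow> - ln (det K) + g K \<le> - ln (det K') + g K')" for K
    unfolding gen_glasso_obj_minimizer_iff[OF L U] obj_real F_def mem_Collect_eq ..
  obtain \<alpha> where "0 < \<alpha>" and coercive: "\<forall>K. feasible L U K \<longrightarrow> psd_mat K \<longrightarrow>
      \<alpha> * trace K \<le> trace (S ** K) + penalty L U K"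
    using trace_mult_plus_penalty_coercive[OF S L U] by blast
  have coercive_F: "\<alpha> * trace K \<le> g K" if "K \<in> F" "psd_mat K" for K
    using coercive that unfolding F_def g_def by simp
  have "closed F" "mat 1 \<in> F" unfolding F_def by (simp_all add: closed_feasible feasible_mat_1)
  moreover have "continuous_on UNIV g"
    unfolding g_def trace_def matrix_matrix_mult_def
    by (intro continuous_intros continuous_on_penalty)
  ultimately obtain K0 where K0: "K0 \<in> F" "pd_mat K0"
    "\<And>K. K \<in> F \<Longrightarrow> pd_mat K \<Longrightarrow> - ln (det K0) + g K0 \<le> - ln (det K) + g K"
    using ex_min_neg_ln_det_plus_coercive[OF _ _ _ \<open>0 < \<alpha>\<close> coercive_F] by blast
  show ?thesis
  proof (rule ex1I[of _ K0])
    show "pd_mat K0 \<and> (\<forall>K'. pd_mat K' \<longrightarrow> gen_glasso_obj S L U K0 \<le> gen_glasso_obj S L U K')"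
      unfolding min_iff using K0 by blast
  next
    fix K assume "pd_mat K \<and> (\<forall>K'. pd_mat K' \<longrightarrow> gen_glasso_obj S L U K \<le> gen_glasso_obj S L U K')"
    then have K: "K \<in> F" "pd_mat K"
      "\<And>K'. K' \<in> F \<Longrightarrow> pd_mat K' \<Longrightarrow> - ln (det K) + g K \<le> - ln (det K') + g K'"
      unfolding min_iff by blast+
    show "K = K0"
    proof (rule neg_ln_det_plus_convex_min_unique[OF _ _ K K0])
      show "(1/2) *\<^sub>R (A + B) \<in> F" if "A \<in> F" "B \<in> F" for A B
        using that feasible_midpoint unfolding F_def by blast
      show "g ((1/2) *\<^sub>R (A + B)) \<le> (g A + g B) / 2" for A B
        unfolding g_def using trace_mult_midpoint[of S A B] penalty_midpoint[of L U A B] by simp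
    qed
  qed
qed

lemma gen_glasso_obj_eq_pos_glasso_obj:
  assumes "0 < \<rho>"
  shows "gen_glasso_obj S (\<chi> i j. 0) (\<chi> i j. if i = j then 0 else ereal \<rho>) K
    = ereal (pos_glasso_obj S \<rho> K)"
proof -
  have "max ((\<chi> i j. (0::ereal))$i$j * ereal (K$i$j))
        ((\<chi> i j. if i = j then 0 else ereal \<rho>)$i$j * ereal (K$i$j))
      = ereal (\<rho> * max 0 (K$i$j))" if "i \<noteq> j" for i j
    using that assms by (auto simp: max_def mult_le_0_iff zero_le_mult_iff zero_ereal_def[symmetric])
  then show ?thesis
    unfolding gen_glasso_obj_def pos_glasso_obj_def by (simp add: sum_distrib_left)
qed

theorem pos_glasso_unique_minimizer:
  fixes S :: "real^'n^'n"
  assumes S: "psd_mat S" "\<forall>i. 0 < S$i$i" "\<forall>i j. i \<noteq> j \<longrightarrow> S$i$j < sqrt (S$i$i * S$j$j)"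
    and "0 < \<rho>"
  shows "\<exists>!K. pd_mat K \<and> (\<forall>K'. pd_mat K' \<longrightarrow> pos_glasso_obj S \<rho> K \<le> pos_glasso_obj S \<rho> K')"
  using gen_glasso_unique_minimizer[OF S, of "\<chi> i j. 0" "\<chi> i j. if i = j then 0 else ereal \<rho>"]
    \<open>0 < \<rho>\<close> unfolding gen_glasso_obj_eq_pos_glasso_obj[OF \<open>0 < \<rho>\<close>] by simp

section \<open>Sample covariances of Gaussian samples\<close>

lemma borel_measurable_gauss_density:
  fixes \<Sigma> :: "real^'n^'n"
  shows "(\<lambda>x::real^'n. ennreal ((2 * pi) powr (- real CARD('n) / 2) * det \<Sigma> powr (-1/2)
       * exp (- (x \<bullet> (matrix_inv \<Sigma> *v x)) / 2))) \<in> borel_measurable lborel"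
proof -
  have "continuous_on UNIV (\<lambda>x::real^'n. (2 * pi) powr (- real CARD('n) / 2) * det \<Sigma> powr (-1/2)
       * exp (- (x \<bullet> (matrix_inv \<Sigma> *v x)) / 2))"
    unfolding inner_vec_def matrix_vector_mult_def by (intro continuous_intros) auto
  then show ?thesis
    unfolding measurable_lborel2
    by (intro measurable_compose[OF borel_measurable_continuous_onI measurable_ennreal])
qed

lemma sets_gauss_vec [simp]: "sets (gauss_vec \<Sigma>) = sets borel"
  unfolding gauss_vec_def by simp

lemma space_gauss_vec [simp]: "space (gauss_vec \<Sigma>) = UNIV"
  unfolding gauss_vec_def by simp

lemma sigma_finite_gauss_vec: "sigma_finite_measure (gauss_vec \<Sigma>)"
  unfolding gauss_vec_def
  by (subst sigma_finite_measure.sigma_finite_iff_density_finite[OF sigma_finite_lborel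
        borel_measurable_gauss_density]) simp

lemma null_sets_gauss_vec:
  assumes "H \<in> null_sets lborel"
  shows "H \<in> null_sets (gauss_vec \<Sigma>)"
  unfolding gauss_vec_def null_sets_density_iff[OF borel_measurable_gauss_density]
proof
  show "H \<in> sets lborel" using assms by (rule null_setsD2)
  show "AE x in lborel. x \<in> H \<longrightarrow> ennreal ((2 * pi) powr (- real CARD('n) / 2)
      * det \<Sigma> powr (-1/2) * exp (- (x \<bullet> (matrix_inv \<Sigma> *v x)) / 2)) = 0"
    by (rule AE_I'[OF assms]) blast
qed

lemma hyperplane_null_sets_lborel:
  fixes w :: "real^'n"
  assumes "w \<noteq> 0"
  shows "{y. w \<bullet> y = 0} \<in> null_sets lborel"
proof -
  have "negligible {y. w \<bullet> y = 0}" using negligible_hyperplane[of w 0] assms by simp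
  then have "{y. w \<bullet> y = 0} \<in> null_sets lebesgue" by (simp add: negligible_iff_null_sets)
  moreover have "closed {y. w \<bullet> y = 0}" by (intro closed_Collect_eq continuous_intros)
  ultimately show ?thesis by (simp add: null_sets_completion_iff)
qed

lemma (in product_sigma_finite) nn_integral_PiM_fun_upd_null_section:
  assumes J: "finite J" "k \<in> J" "l \<notin> J" and "y \<in> space (M l)"
    and null: "{x \<in> space (M k). Q x y} \<in> null_sets (M k)"
  shows "(\<integral>\<^sup>+ x. indicator {X \<in> space (PiM (insert l J) M). Q (X k) (X l)} (x(l := y)) \<partial>PiM J M) = 0"
proof -
  define A where "A j = (if j = k then {x \<in> space (M k). Q x y} else space (M j))" for j
  have A_null: "A k \<in> null_sets (M k)" using null by (simp add: A_def)
  have "(\<integral>\<^sup>+ x. indicator {X \<in> space (PiM (insert l J) M). Q (X k) (X l)} (x(l := y)) \<partial>PiM J M)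
      = (\<integral>\<^sup>+ x. indicator (PiE J A) x \<partial>PiM J M)"
  proof (rule nn_integral_cong)
    fix x assume "x \<in> space (PiM J M)"
    then have "x(l := y) \<in> {X \<in> space (PiM (insert l J) M). Q (X k) (X l)} \<longleftrightarrow> x \<in> PiE J A"
      using \<open>y \<in> space (M l)\<close> J unfolding A_def
      by (auto simp: space_PiM PiE_iff split: if_splits)
    then show "indicator {X \<in> space (PiM (insert l J) M). Q (X k) (X l)} (x(l := y))
        = (indicator (PiE J A) x :: ennreal)"
      by (simp add: indicator_def)
  qed
  also have "\<dots> = (\<Prod>j\<in>J. emeasure (M j) (A j))"
    using A_null J(1) by (intro nn_integral_indicator[THEN trans] emeasure_PiM sets_PiM_I_finite)
      (auto simp: A_def)
  also have "\<dots> = 0"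
    using A_null J by (intro prod_zero bexI[of _ k]) auto
  finally show ?thesis .
qed

lemma null_sets_PiM_coordinate_sections:
  assumes M: "product_sigma_finite M" and I: "finite I" "k \<in> I" "l \<in> I" "k \<noteq> l"
    and meas: "{X \<in> space (PiM I M). Q (X k) (X l)} \<in> sets (PiM I M)"
    and Z: "Z \<in> null_sets (M l)"
    and sections: "\<And>y. y \<in> space (M l) \<Longrightarrow> y \<notin> Z \<Longrightarrow> {x \<in> space (M k). Q x y} \<in> null_sets (M k)"
  shows "{X \<in> space (PiM I M). Q (X k) (X l)} \<in> null_sets (PiM I M)"
proof -
  interpret product_sigma_finite M by (rule M)
  define J where "J = I - {l}"
  have IJ: "I = insert l J" and J: "finite J" "k \<in> J" "l \<notin> J" using I unfolding J_def by auto
  let ?N = "{X \<in> space (PiM I M). Q (X k) (X l)}"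
  have ind_meas: "(\<lambda>X. indicator ?N X :: ennreal) \<in> borel_measurable (PiM (insert l J) M)"
    using meas unfolding IJ[symmetric] by simp
  have section_integral:
    "(\<integral>\<^sup>+ x. indicator ?N (x(l := y)) \<partial>PiM J M) \<le> \<infinity> * indicator Z y" if "y \<in> space (M l)" for y
  proof (cases "y \<in> Z")
    case False
    then show ?thesis
      using nn_integral_PiM_fun_upd_null_section[where Q = Q, OF J that sections[OF that False]]
      unfolding IJ by simp
  qed simp
  have "emeasure (PiM I M) ?N = (\<integral>\<^sup>+ X. indicator ?N X \<partial>PiM (insert l J) M)"
    unfolding IJ[symmetric] by (rule nn_integral_indicator[OF meas, symmetric])
  also have "\<dots> = (\<integral>\<^sup>+ y. (\<integral>\<^sup>+ x. indicator ?N (x(l := y)) \<partial>PiM J M) \<partial>M l)"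
    by (rule product_nn_integral_insert_rev[OF J(1,3) ind_meas])
  also have "\<dots> \<le> (\<integral>\<^sup>+ y. \<infinity> * indicator Z y \<partial>M l)"
    by (intro nn_integral_mono section_integral)
  also have "\<dots> = \<infinity> * emeasure (M l) Z"
    using Z by (intro nn_integral_cmult_indicator) auto
  also have "\<dots> = 0" using null_setsD1[OF Z] by simp
  finally show ?thesis using meas by (simp add: null_sets_def)
qed

lemma measurable_PiM_component_nth:
  assumes "k \<in> I"
  shows "(\<lambda>X. X k $ i) \<in> borel_measurable (PiM I (\<lambda>_. gauss_vec \<Sigma>))"
proof -
  have "(\<lambda>X. X k) \<in> measurable (PiM I (\<lambda>_. gauss_vec \<Sigma>)) borel"
    using measurable_component_singleton[OF assms, of "\<lambda>_. gauss_vec \<Sigma>"]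
    by (simp add: measurable_cong_sets[OF refl sets_gauss_vec])
  then show ?thesis by (rule measurable_compose[OF _ borel_measurable_nth])
qed

text \<open>For a fixed second observation \<open>y\<close> with \<open>y\<^sub>i \<noteq> 0\<close>, the event
  \<open>x\<^sub>i y\<^sub>j = y\<^sub>i x\<^sub>j\<close> is a hyperplane in the first observation \<open>x\<close>.\<close>

lemma null_sets_gauss_sample_minor:
  fixes \<Sigma> :: "real^'n^'n" and i j :: 'n and n :: nat
  assumes "i \<noteq> j" and "2 \<le> n"
  shows "{X \<in> space (PiM {..<n} (\<lambda>_. gauss_vec \<Sigma>)). X 0 $ i * X 1 $ j = X 1 $ i * X 0 $ j}
           \<in> null_sets (PiM {..<n} (\<lambda>_. gauss_vec \<Sigma>))"
proof -
  have M: "product_sigma_finite (\<lambda>_::nat. gauss_vec \<Sigma>)"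
    unfolding product_sigma_finite_def using sigma_finite_gauss_vec by blast
  have "(\<lambda>X. X 0 $ i * X 1 $ j - X 1 $ i * X 0 $ j) \<in> borel_measurable (PiM {..<n} (\<lambda>_. gauss_vec \<Sigma>))"
    using \<open>2 \<le> n\<close> by (intro borel_measurable_diff borel_measurable_times measurable_PiM_component_nth) auto
  from measurable_sets[OF this, of "{0}"]
  have meas: "{X \<in> space (PiM {..<n} (\<lambda>_. gauss_vec \<Sigma>)). X 0 $ i * X 1 $ j = X 1 $ i * X 0 $ j}
      \<in> sets (PiM {..<n} (\<lambda>_. gauss_vec \<Sigma>))"
    by (simp add: vimage_def Int_def conj_commute)
  have Z: "{y. axis i 1 \<bullet> y = 0} \<in> null_sets (gauss_vec \<Sigma>)"
    by (intro null_sets_gauss_vec hyperplane_null_sets_lborel) simp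
  have sections: "{x \<in> space (gauss_vec \<Sigma>). x $ i * y $ j = y $ i * x $ j} \<in> null_sets (gauss_vec \<Sigma>)"
    if "y \<in> space (gauss_vec \<Sigma>)" "y \<notin> {y. axis i 1 \<bullet> y = 0}" for y
  proof -
    have "y $ i \<noteq> 0" using that(2) by (simp add: inner_axis')
    define w where "w = y $ j *\<^sub>R axis i 1 - y $ i *\<^sub>R axis j (1::real)"
    have "w $ j \<noteq> 0" using \<open>y $ i \<noteq> 0\<close> \<open>i \<noteq> j\<close> unfolding w_def by (simp add: axis_def)
    then have "{x. w \<bullet> x = 0} \<in> null_sets (gauss_vec \<Sigma>)"
      by (intro null_sets_gauss_vec hyperplane_null_sets_lborel) auto
    moreover have "{x \<in> space (gauss_vec \<Sigma>). x $ i * y $ j = y $ i * x $ j} = {x. w \<bullet> x = 0}"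
      unfolding w_def by (auto simp: inner_axis' algebra_simps)
    ultimately show ?thesis by simp
  qed
  show ?thesis
    by (rule null_sets_PiM_coordinate_sections[where Q = "\<lambda>x y. x $ i * y $ j = y $ i * x $ j",
          OF M _ _ _ _ meas Z sections]) (use \<open>2 \<le> n\<close> in auto)
qed

lemma lagrange_identity_minor_le:
  fixes a b :: "nat \<Rightarrow> real" and n :: nat
  assumes "2 \<le> n"
  shows "(a 0 * b 1 - a 1 * b 0)\<^sup>2
    \<le> (\<Sum>k<n. a k * a k) * (\<Sum>k<n. b k * b k) - (\<Sum>k<n. a k * b k)\<^sup>2"
proof -
  define m where "m k l = (a k * b l - a l * b k)\<^sup>2" for k l
  have "m k l = (a k * a k) * (b l * b l) + (b k * b k) * (a l * a l)
      - 2 * ((a k * b k) * (a l * b l))" for k l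
    unfolding m_def by (simp add: power2_eq_square algebra_simps)
  then have "(\<Sum>k<n. \<Sum>l<n. m k l) = (\<Sum>k<n. \<Sum>l<n. (a k * a k) * (b l * b l))
      + (\<Sum>k<n. \<Sum>l<n. (b k * b k) * (a l * a l)) - 2 * (\<Sum>k<n. \<Sum>l<n. (a k * b k) * (a l * b l))"
    by (simp only: sum.distrib sum_subtractf sum_distrib_left)
  also have "\<dots> = 2 * ((\<Sum>k<n. a k * a k) * (\<Sum>k<n. b k * b k) - (\<Sum>k<n. a k * b k)\<^sup>2)"
    by (simp only: sum_product[symmetric]) (simp add: power2_eq_square algebra_simps)
  finally have "(\<Sum>k<n. \<Sum>l<n. m k l)
      = 2 * ((\<Sum>k<n. a k * a k) * (\<Sum>k<n. b k * b k) - (\<Sum>k<n. a k * b k)\<^sup>2)" .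
  moreover have "m 0 1 + m 1 0 \<le> (\<Sum>k<n. \<Sum>l<n. m k l)"
  proof -
    have "m 0 1 \<le> (\<Sum>l<n. m 0 l)" "m 1 0 \<le> (\<Sum>l<n. m 1 l)"
      using \<open>2 \<le> n\<close> by (auto intro!: member_le_sum simp: m_def)
    moreover have "(\<Sum>k\<in>{0,1}. \<Sum>l<n. m k l) \<le> (\<Sum>k<n. \<Sum>l<n. m k l)"
      using \<open>2 \<le> n\<close> by (intro sum_mono2) (auto intro: sum_nonneg simp: m_def)
    ultimately show ?thesis by simp
  qed
  moreover have "m 1 0 = m 0 1" unfolding m_def by (simp add: power2_commute)
  ultimately show ?thesis unfolding m_def by simp
qed

text \<open>By Lagrange's identity the Cauchy-Schwarz gap dominates the squared \<open>2 \<times> 2\<close> minor of the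
  first two observations.\<close>

lemma sample_cov_not_strict_imp_minor_zero:
  fixes X :: "nat \<Rightarrow> real^'n" and n :: nat
  assumes "2 \<le> n"
    and "\<not> sample_cov n X $i$j < sqrt (sample_cov n X $i$i * sample_cov n X $j$j)"
  shows "X 0 $ i * X 1 $ j = X 1 $ i * X 0 $ j"
proof -
  define A where "A = (\<Sum>k<n. X k $ i * X k $ i)"
  define B where "B = (\<Sum>k<n. X k $ j * X k $ j)"
  define C where "C = (\<Sum>k<n. X k $ i * X k $ j)"
  have "real n > 0" using \<open>2 \<le> n\<close> by simp
  have "sqrt (A / real n * (B / real n)) = sqrt (A * B) / real n"
    using \<open>real n > 0\<close> by (simp add: real_sqrt_divide real_sqrt_mult power2_eq_square[symmetric])
  then have "sqrt (A * B) \<le> C"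
    using assms(2) \<open>real n > 0\<close> unfolding sample_cov_def A_def B_def C_def
    by (simp add: divide_less_cancel)
  then have "A * B \<le> C\<^sup>2" by (rule sqrt_le_D)
  moreover have "(X 0 $ i * X 1 $ j - X 1 $ i * X 0 $ j)\<^sup>2 \<le> A * B - C\<^sup>2"
    unfolding A_def B_def C_def by (rule lagrange_identity_minor_le[OF \<open>2 \<le> n\<close>])
  ultimately have "(X 0 $ i * X 1 $ j - X 1 $ i * X 0 $ j)\<^sup>2 \<le> 0" by linarith
  then show ?thesis by simp
qed

theorem AE_sample_cov_strict_cauchy_schwarz:
  fixes \<Sigma> :: "real^'n^'n" and n :: nat
  assumes "2 \<le> n"
  shows "AE X in PiM {..<n} (\<lambda>_. gauss_vec \<Sigma>).
    \<forall>i j. i \<noteq> j \<longrightarrow> sample_cov n X $i$j < sqrt (sample_cov n X $i$i * sample_cov n X $j$j)"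
proof -
  have "AE X in PiM {..<n} (\<lambda>_. gauss_vec \<Sigma>). \<forall>p\<in>{p. fst p \<noteq> snd p}.
      sample_cov n X $fst p$snd p < sqrt (sample_cov n X $fst p$fst p * sample_cov n X $snd p$snd p)"
  proof (rule AE_finite_allI)
    fix p :: "'n \<times> 'n" assume "p \<in> {p. fst p \<noteq> snd p}"
    then show "AE X in PiM {..<n} (\<lambda>_. gauss_vec \<Sigma>). sample_cov n X $fst p$snd p
        < sqrt (sample_cov n X $fst p$fst p * sample_cov n X $snd p$snd p)"
      using sample_cov_not_strict_imp_minor_zero[OF \<open>2 \<le> n\<close>]
      by (intro AE_I'[OF null_sets_gauss_sample_minor[of "fst p" "snd p" n \<Sigma>]]) (auto simp: assms)
  qed simp
  then show ?thesis by (rule AE_mp) auto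
qed

theorem theorem8p8:
  shows
  "(\<forall>(S::real^'n^'n) \<rho>::real.
      psd_mat S \<and> (\<forall>i. S$i$i > 0) \<and> \<rho> > 0 \<and>
      (\<forall>i j. i \<noteq> j \<longrightarrow> S$i$j < sqrt (S$i$i * S$j$j)) \<longrightarrow>
      (\<exists>!K. pd_mat K \<and> (\<forall>K'. pd_mat K' \<longrightarrow> pos_glasso_obj S \<rho> K \<le> pos_glasso_obj S \<rho> K')))
   \<and>
   (\<forall>(\<Sigma>::real^'n^'n) n::nat. pd_mat \<Sigma> \<and> n \<ge> 2 \<longrightarrow>
      (AE X in PiM {..<n} (\<lambda>_. gauss_vec \<Sigma>).
         \<forall>i j. i \<noteq> j \<longrightarrow> sample_cov n X $i$j < sqrt (sample_cov n X $i$i * sample_cov n X $j$j)))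
   \<and>
   (\<forall>(S::real^'n^'n) (L::ereal^'n^'n) (U::ereal^'n^'n).
      psd_mat S \<and> (\<forall>i. S$i$i > 0) \<and>
      (\<forall>i j. i \<noteq> j \<longrightarrow> S$i$j < sqrt (S$i$i * S$j$j)) \<and>
      sym_mat L \<and> sym_mat U \<and> (\<forall>i j. L$i$j \<le> 0) \<and> (\<forall>i. L$i$i = 0 \<and> U$i$i = 0) \<and>
      (\<forall>i j. i \<noteq> j \<longrightarrow> U$i$j > 0) \<longrightarrow>
      (\<exists>!K. pd_mat K \<and> (\<forall>K'. pd_mat K' \<longrightarrow> gen_glasso_obj S L U K \<le> gen_glasso_obj S L U K')))"
proof (intro conjI allI impI)
  fix S :: "real^'n^'n" and \<rho> :: real
  assume "psd_mat S \<and> (\<forall>i. S$i$i > 0) \<and> \<rho> > 0 \<and> (\<forall>i j. i \<noteq> j \<longrightarrow> S$i$j < sqrt (S$i$i * S$j$j))"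
  then show "\<exists>!K. pd_mat K \<and> (\<forall>K'. pd_mat K' \<longrightarrow> pos_glasso_obj S \<rho> K \<le> pos_glasso_obj S \<rho> K')"
    by (intro pos_glasso_unique_minimizer) auto
next
  fix \<Sigma> :: "real^'n^'n" and n :: nat
  assume "pd_mat \<Sigma> \<and> n \<ge> 2"
  then show "AE X in PiM {..<n} (\<lambda>_. gauss_vec \<Sigma>).
      \<forall>i j. i \<noteq> j \<longrightarrow> sample_cov n X $i$j < sqrt (sample_cov n X $i$i * sample_cov n X $j$j)"
    by (intro AE_sample_cov_strict_cauchy_schwarz) auto
next
  fix S :: "real^'n^'n" and L U :: "ereal^'n^'n"
  assume "psd_mat S \<and> (\<forall>i. S$i$i > 0) \<and> (\<forall>i j. i \<noteq> j \<longrightarrow> S$i$j < sqrt (S$i$i * S$j$j)) \<and>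
      sym_mat L \<and> sym_mat U \<and> (\<forall>i j. L$i$j \<le> 0) \<and> (\<forall>i. L$i$i = 0 \<and> U$i$i = 0) \<and>
      (\<forall>i j. i \<noteq> j \<longrightarrow> U$i$j > 0)"
  then show "\<exists>!K. pd_mat K \<and> (\<forall>K'. pd_mat K' \<longrightarrow> gen_glasso_obj S L U K \<le> gen_glasso_obj S L U K')"
    by (intro gen_glasso_unique_minimizer) auto
qed

end
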